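(* Let $a,b\in C^0(\mathbb{R})$ be even and positive, and let $G\in C^0(\mathbb{R})$ be even with $G(s)\ge G(M)=0$ for all $s\in\mathbb{R}$ and $G(s)>0$ for $s\in[0,M)$, for some $M>0$. Let $L>0$, $I:=(-L,L)$, and let $(u_{m_k})_{k\ge1}$ be a sequence such that each $u_{m_k}$ is a minimizer of $\mathcal{E}(\cdot,I)$ in $H^1_{m_k}(I)$, where $m_k\ge0$ and $m_k\to m$. Then, up to a subsequence, $u_{m_k}\to u_m$ in $H^1(I)$, where $u_m$ is a minimizer of $\mathcal{E}(\cdot,I)$ in $H^1_m(I)$. In particular, $u_{m_k}\to u_m$ in $C^0(\overline I)$.
   Context: $H^1_m(I):=\{u\in H^1(I):u(-L)=-m,\ u(L)=m\}$ and $\mathcal{E}(u,I):=\int_{-L}^L\{\tfrac12(u')^2a(x)+G(u)b(x)\}\,dx$; minimizer means absolute minimizer. *)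

theory Defs
  imports "HOL-Analysis.Analysis"
begin

text \<open>Sobolev space H^1 on the interval I = (-L,L), via the continuous representative:
  u is in H^1(I) iff there is a square-integrable v on [-L,L] with
  u x = u(-L) + integral of v over [-L,x] for all x in [-L,L]; v is then the weak derivative.\<close>

definition is_wderiv :: "real \<Rightarrow> (real \<Rightarrow> real) \<Rightarrow> (real \<Rightarrow> real) \<Rightarrow> bool" where
  "is_wderiv L u v \<longleftrightarrow>
     set_borel_measurable lborel {-L..L} v \<and>
     set_integrable lborel {-L..L} (\<lambda>x. (v x)\<^sup>2) \<and>
     (\<forall>x\<in>{-L..L}. u x = u (-L) + (LINT t:{-L..x}|lborel. v t))"

definition H1 :: "real \<Rightarrow> (real \<Rightarrow> real) \<Rightarrow> bool" where
  "H1 L u \<longleftrightarrow> (\<exists>v. is_wderiv L u v)"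

definition H1m :: "real \<Rightarrow> real \<Rightarrow> (real \<Rightarrow> real) \<Rightarrow> bool" where
  "H1m L m u \<longleftrightarrow> H1 L u \<and> u (-L) = -m \<and> u L = m"

definition energy :: "(real \<Rightarrow> real) \<Rightarrow> (real \<Rightarrow> real) \<Rightarrow> (real \<Rightarrow> real) \<Rightarrow> real
    \<Rightarrow> (real \<Rightarrow> real) \<Rightarrow> (real \<Rightarrow> real) \<Rightarrow> real" where
  "energy a b G L u v = (LINT x:{-L..L}|lborel. (1/2) * (v x)\<^sup>2 * a x + G (u x) * b x)"

definition minimizer :: "(real \<Rightarrow> real) \<Rightarrow> (real \<Rightarrow> real) \<Rightarrow> (real \<Rightarrow> real) \<Rightarrow> real
    \<Rightarrow> real \<Rightarrow> (real \<Rightarrow> real) \<Rightarrow> bool" where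
  "minimizer a b G L m u \<longleftrightarrow> H1m L m u \<and>
     (\<forall>w v v'. H1m L m w \<longrightarrow> is_wderiv L u v \<longrightarrow> is_wderiv L w v' \<longrightarrow>
        energy a b G L u v \<le> energy a b G L w v')"

definition H1_converges :: "real \<Rightarrow> (nat \<Rightarrow> real \<Rightarrow> real) \<Rightarrow> (real \<Rightarrow> real) \<Rightarrow> bool" where
  "H1_converges L f g \<longleftrightarrow>
     (\<lambda>k. LINT x:{-L..L}|lborel. (f k x - g x)\<^sup>2) \<longlonglongrightarrow> 0 \<and>
     (\<forall>v w. is_wderiv L g v \<longrightarrow> (\<forall>k. is_wderiv L (f k) (w k)) \<longrightarrow>
        (\<lambda>k. LINT x:{-L..L}|lborel. (w k x - v x)\<^sup>2) \<longlonglongrightarrow> 0)"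

end

theory Submission
  imports Defs "HOL-Complex_Analysis.Great_Picard"
begin

text \<open>
  Testing a minimizer against the linear function with the same boundary values bounds its
  energy, hence the \<open>L\<^sup>2\<close> norm of its derivative, uniformly for bounded \<open>m\<close>. The estimate
  \<open>\<bar>u x - u y\<bar> \<le> \<bar>x - y\<bar>\<^sup>1\<^sup>/\<^sup>2 \<parallel>u'\<parallel>\<^sub>2\<close> makes the minimizers equicontinuous, so by
  Arzela-Ascoli a subsequence converges uniformly to some \<open>g\<close>.

  The derivatives of this subsequence are Cauchy in \<open>L\<^sup>2\<close>: testing two minimizers \<open>u\<^sub>1, u\<^sub>2\<close>
  against the admissible competitors \<open>(u\<^sub>1 + u\<^sub>2)/2 \<plusminus> (m\<^sub>1 - m\<^sub>2) x / (2L)\<close>, the parallelogram law gives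
  \<open>\<integral> a (u\<^sub>1' - u\<^sub>2')\<^sup>2 / 4 \<le> ((m\<^sub>1 - m\<^sub>2) / (2L))\<^sup>2 \<integral> a\<close> plus differences of potential energies, and
  these are small since the potential energy is continuous under uniform convergence.
  A further subsequence of derivatives converges in \<open>L\<^sup>2\<close> to some \<open>W\<close>, the weak derivative
  of \<open>g\<close>. Then the energies converge, and passing to the limit in the minimality of
  \<open>u\<^sub>k\<close> against the competitors \<open>w + (m\<^sub>k - m) x / L\<close> shows that \<open>g\<close> minimizes in \<open>H\<^sup>1\<^sub>m\<close>.
\<close>

section \<open>Square-integrable functions on an interval\<close>

text \<open>\<open>L\<^sup>2(S)\<close>, with functions represented by their extension by zero to the real line.\<close>

definition L2_on :: "real set \<Rightarrow> (real \<Rightarrow> real) \<Rightarrow> bool" where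
  "L2_on S f \<longleftrightarrow> f \<in> borel_measurable lborel \<and> integrable lborel (\<lambda>x. (f x)\<^sup>2) \<and> (\<forall>x. x \<notin> S \<longrightarrow> f x = 0)"

lemma L2_onD:
  assumes "L2_on S f"
  shows "f \<in> borel_measurable lborel" "integrable lborel (\<lambda>x. (f x)\<^sup>2)" "\<And>x. x \<notin> S \<Longrightarrow> f x = 0"
  using assms unfolding L2_on_def by auto

lemma abs_le_square_div_add:
  assumes "0 < t"
  shows "\<bar>z::real\<bar> \<le> z\<^sup>2 / (2*t) + t/2"
proof -
  have "0 \<le> (\<bar>z\<bar> - t)\<^sup>2" by simp
  hence "2*t*\<bar>z\<bar> \<le> z\<^sup>2 + t\<^sup>2" by (simp add: power2_eq_square algebra_simps)
  thus ?thesis using assms by (simp add: field_simps power2_eq_square)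
qed

lemma integrable_indicator_Icc_mult: "integrable lborel (\<lambda>x. indicator {a..b::real} x * (c::real))"
  by (intro integrable_mult_left integrable_real_indicator) (auto simp: emeasure_lborel_Icc_eq)

lemma integrable_mult_square_integrable:
  fixes f g :: "'a \<Rightarrow> real"
  assumes "f \<in> borel_measurable M" "g \<in> borel_measurable M"
    and "integrable M (\<lambda>x. (f x)\<^sup>2)" "integrable M (\<lambda>x. (g x)\<^sup>2)"
  shows "integrable M (\<lambda>x. f x * g x)"
proof (rule Bochner_Integration.integrable_bound)
  show "integrable M (\<lambda>x. (f x)\<^sup>2 + (g x)\<^sup>2)" using assms by auto
  show "(\<lambda>x. f x * g x) \<in> borel_measurable M" using assms by measurable
  have "\<bar>f x\<bar> * \<bar>g x\<bar> \<le> (f x)\<^sup>2 + (g x)\<^sup>2" for x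
  proof -
    have "2 * \<bar>f x\<bar> * \<bar>g x\<bar> \<le> (f x)\<^sup>2 + (g x)\<^sup>2"
      using sum_squares_bound[of "\<bar>f x\<bar>" "\<bar>g x\<bar>"] by (simp add: power2_eq_square)
    moreover have "0 \<le> \<bar>f x\<bar> * \<bar>g x\<bar>" by simp
    ultimately show ?thesis by linarith
  qed
  thus "AE x in M. norm (f x * g x) \<le> norm ((f x)\<^sup>2 + (g x)\<^sup>2)"
    by (simp add: abs_mult)
qed

lemma integral_abs_mult_le_sqrt:
  fixes f g :: "'a \<Rightarrow> real"
  assumes [measurable]: "f \<in> borel_measurable M" "g \<in> borel_measurable M"
    and sq: "integrable M (\<lambda>x. (f x)\<^sup>2)" "integrable M (\<lambda>x. (g x)\<^sup>2)"
  shows "(\<integral>x. \<bar>f x * g x\<bar> \<partial>M) \<le> sqrt (\<integral>x. (f x)\<^sup>2 \<partial>M) * sqrt (\<integral>x. (g x)\<^sup>2 \<partial>M)"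
proof -
  have fg: "integrable M (\<lambda>x. \<bar>f x * g x\<bar>)"
    using integrable_mult_square_integrable[OF assms] by auto
  have nn: "(\<integral>\<^sup>+x. ennreal (h x) \<partial>M) = ennreal (\<integral>x. h x \<partial>M)"
    if "integrable M h" "\<And>x. 0 \<le> h x" for h :: "'a \<Rightarrow> real"
    using that by (intro nn_integral_eq_integral) auto
  have sq_eq: "ennreal \<bar>h x\<bar> ^ 2 = ennreal ((h x)\<^sup>2)" for h :: "'a \<Rightarrow> real" and x
    by (simp add: ennreal_power)
  have "ennreal ((\<integral>x. \<bar>f x * g x\<bar> \<partial>M)\<^sup>2) = (\<integral>\<^sup>+x. ennreal \<bar>f x\<bar> * ennreal \<bar>g x\<bar> \<partial>M)\<^sup>2"
    using nn[OF fg] by (simp add: abs_mult ennreal_mult ennreal_power)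
  also have "\<dots> \<le> (\<integral>\<^sup>+x. ennreal \<bar>f x\<bar> ^ 2 \<partial>M) * (\<integral>\<^sup>+x. ennreal \<bar>g x\<bar> ^ 2 \<partial>M)"
    by (rule Cauchy_Schwarz_nn_integral) measurable
  also have "\<dots> = ennreal ((\<integral>x. (f x)\<^sup>2 \<partial>M) * (\<integral>x. (g x)\<^sup>2 \<partial>M))"
    using nn[OF sq(1)] nn[OF sq(2)] sq_eq
    by (simp add: ennreal_power[symmetric] ennreal_mult integral_nonneg_AE)
  finally have "(\<integral>x. \<bar>f x * g x\<bar> \<partial>M)\<^sup>2 \<le> (\<integral>x. (f x)\<^sup>2 \<partial>M) * (\<integral>x. (g x)\<^sup>2 \<partial>M)"
    by (simp add: ennreal_le_iff integral_nonneg_AE)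
  hence "sqrt ((\<integral>x. \<bar>f x * g x\<bar> \<partial>M)\<^sup>2) \<le> sqrt ((\<integral>x. (f x)\<^sup>2 \<partial>M) * (\<integral>x. (g x)\<^sup>2 \<partial>M))"
    by (rule real_sqrt_le_mono)
  thus ?thesis by (simp add: real_sqrt_mult integral_nonneg_AE)
qed

lemma L2_on_integrable:
  assumes "L2_on {c..d} f"
  shows "integrable lborel f"
proof (rule Bochner_Integration.integrable_bound)
  show "integrable lborel (\<lambda>x. (f x)\<^sup>2 / 2 + indicator {c..d} x * (1/2::real))"
    using L2_onD(2)[OF assms] integrable_indicator_Icc_mult by (intro Bochner_Integration.integrable_add) auto
  show "AE x in lborel. norm (f x) \<le> norm ((f x)\<^sup>2 / 2 + indicator {c..d} x * (1/2::real))"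
    using abs_le_square_div_add[of 1] L2_onD(3)[OF assms] by (intro AE_I2) (auto simp: indicator_def)
qed (use L2_onD(1)[OF assms] in simp)

lemma L2_on_lincomb:
  assumes f: "L2_on S f" and g: "L2_on S g"
  shows "L2_on S (\<lambda>x. \<alpha> * f x + \<beta> * g x)"
proof -
  have "(\<lambda>x. (\<alpha> * f x + \<beta> * g x)\<^sup>2) = (\<lambda>x. \<alpha>\<^sup>2 * (f x)\<^sup>2 + 2*\<alpha>*\<beta> * (f x * g x) + \<beta>\<^sup>2 * (g x)\<^sup>2)"
    by (auto simp: fun_eq_iff power2_eq_square algebra_simps)
  moreover have "integrable lborel (\<lambda>x. f x * g x)"
    using L2_onD[OF f] L2_onD[OF g] by (intro integrable_mult_square_integrable)
  ultimately show ?thesis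
    using L2_onD[OF f] L2_onD[OF g] unfolding L2_on_def by auto
qed

lemma L2_on_diff: "L2_on S f \<Longrightarrow> L2_on S g \<Longrightarrow> L2_on S (\<lambda>x. f x - g x)"
  using L2_on_lincomb[of S f g 1 "-1"] by simp

lemma L2_on_mono: "L2_on S f \<Longrightarrow> S \<subseteq> T \<Longrightarrow> L2_on T f"
  unfolding L2_on_def by blast

lemma L2_on_indicator_mult:
  assumes f: "L2_on S f" and T: "T \<in> sets borel"
  shows "L2_on T (\<lambda>x. indicator T x * f x)"
  unfolding L2_on_def
proof (intro conjI allI impI)
  show "(\<lambda>x. indicator T x * f x) \<in> borel_measurable lborel"
    using T L2_onD(1)[OF f] by measurable
  have "(\<lambda>x. (indicator T x * f x)\<^sup>2) = (\<lambda>x. indicator T x *\<^sub>R (f x)\<^sup>2)"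
    by (auto simp: fun_eq_iff indicator_def)
  thus "integrable lborel (\<lambda>x. (indicator T x * f x)\<^sup>2)"
    using integrable_mult_indicator[OF _ L2_onD(2)[OF f], of T] T by simp
qed simp

lemma indicator_square_eq: "(\<lambda>x. (indicator S x * f x)\<^sup>2) = (\<lambda>x. indicator S x *\<^sub>R (f x :: real)\<^sup>2)"
  by (auto simp: fun_eq_iff indicator_def)

lemma integrable_continuous_mult:
  fixes a h :: "real \<Rightarrow> real"
  assumes a: "continuous_on UNIV a" and h: "integrable lborel h" and z: "\<And>x. x \<notin> {c..d} \<Longrightarrow> h x = 0"
  shows "integrable lborel (\<lambda>x. a x * h x)"
proof -
  have "compact {c..d}" "continuous_on {c..d} a"
    using continuous_on_subset[OF a] by auto
  then obtain B where B: "\<And>x. x \<in> {c..d} \<Longrightarrow> norm (a x) \<le> B"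
    by (rule continuous_on_compact_bound) blast
  show ?thesis
  proof (rule Bochner_Integration.integrable_bound)
    show "integrable lborel (\<lambda>x. B * \<bar>h x\<bar>)" using h by auto
    have "a \<in> borel_measurable lborel" "h \<in> borel_measurable lborel"
      using a h by (auto intro: borel_measurable_continuous_onI)
    thus "(\<lambda>x. a x * h x) \<in> borel_measurable lborel" by measurable
    show "AE x in lborel. norm (a x * h x) \<le> norm (B * \<bar>h x\<bar>)"
    proof (intro AE_I2)
      fix x show "norm (a x * h x) \<le> norm (B * \<bar>h x\<bar>)"
        using B[of x] z[of x] by (cases "x \<in> {c..d}") (auto simp: abs_mult mult_right_mono)
    qed
  qed
qed

lemma integral_abs_le_sqrt_length:
  assumes h: "L2_on {c..d} h" and cd: "c \<le> d"
  shows "(LINT x|lborel. \<bar>h x\<bar>) \<le> sqrt (d - c) * sqrt (LINT x|lborel. (h x)\<^sup>2)"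
proof -
  have ind_sq: "(\<lambda>x. (indicator {c..d} x :: real)\<^sup>2) = (\<lambda>x. indicator {c..d} x * 1)"
    by (auto simp: fun_eq_iff indicator_def)
  have "(LINT x|lborel. \<bar>h x\<bar>) = (LINT x|lborel. \<bar>indicator {c..d} x * h x\<bar>)"
    using L2_onD(3)[OF h] by (intro Bochner_Integration.integral_cong) (auto simp: indicator_def)
  also have "\<dots> \<le> sqrt (LINT x|lborel. (indicator {c..d} x :: real)\<^sup>2) * sqrt (LINT x|lborel. (h x)\<^sup>2)"
    by (rule integral_abs_mult_le_sqrt)
      (use L2_onD[OF h] integrable_indicator_Icc_mult[of c d 1] in \<open>auto simp: ind_sq\<close>)
  also have "(LINT x|lborel. (indicator {c..d} x :: real)\<^sup>2) = d - c"
    unfolding ind_sq using cd by simp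
  finally show ?thesis .
qed

lemma L2_Cauchy_imp_L1_Cauchy:
  fixes f :: "nat \<Rightarrow> real \<Rightarrow> real"
  assumes f: "\<And>n. L2_on {c..d} (f n)" and cd: "c \<le> d"
    and C: "\<And>e. e > 0 \<Longrightarrow> \<exists>N. \<forall>i\<ge>N. \<forall>j\<ge>N. (LINT x|lborel. (f i x - f j x)\<^sup>2) < e"
    and e: "e > 0"
  shows "\<exists>N. \<forall>i\<ge>N. \<forall>j\<ge>N. (LINT x|lborel. norm (f i x - f j x)) < e"
proof -
  define s where "s = sqrt (d - c)"
  have s: "0 \<le> s" using cd by (simp add: s_def)
  obtain N where N: "\<forall>i\<ge>N. \<forall>j\<ge>N. (LINT x|lborel. (f i x - f j x)\<^sup>2) < (e / (s + 1))\<^sup>2"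
    using C[of "(e / (s + 1))\<^sup>2"] e s by auto
  show ?thesis
  proof (intro exI allI impI)
    fix i j assume ij: "N \<le> i" "N \<le> j"
    have "sqrt (LINT x|lborel. (f i x - f j x)\<^sup>2) < e / (s + 1)"
      using real_sqrt_less_mono[OF N[rule_format, OF ij]] e s by simp
    hence "s * sqrt (LINT x|lborel. (f i x - f j x)\<^sup>2) \<le> s * (e / (s + 1))"
      using s by (intro mult_left_mono) auto
    also have "\<dots> < e" using e s by (simp add: field_simps)
    finally have "s * sqrt (LINT x|lborel. (f i x - f j x)\<^sup>2) < e" .
    moreover have "(LINT x|lborel. \<bar>f i x - f j x\<bar>) \<le> s * sqrt (LINT x|lborel. (f i x - f j x)\<^sup>2)"
      unfolding s_def by (rule integral_abs_le_sqrt_length[OF L2_on_diff[OF f f] cd])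
    ultimately show "(LINT x|lborel. norm (f i x - f j x)) < e" by simp
  qed
qed

lemma integral_le_of_AE_tendsto:
  fixes F :: "nat \<Rightarrow> 'a \<Rightarrow> real"
  assumes [measurable]: "\<And>j. F j \<in> borel_measurable M" "h \<in> borel_measurable M"
    and nonneg: "\<And>j x. 0 \<le> F j x" and int: "\<And>j. integrable M (F j)"
    and lim: "AE x in M. (\<lambda>j. F j x) \<longlonglongrightarrow> h x"
    and bound: "eventually (\<lambda>j. (\<integral>x. F j x \<partial>M) \<le> e) sequentially"
  shows "integrable M h" "(\<integral>x. h x \<partial>M) \<le> e"
proof -
  have h_nonneg: "AE x in M. 0 \<le> h x"
    using lim by eventually_elim (rule LIMSEQ_le_const[OF _ exI[of _ 0]], use nonneg in auto)
  have "(\<integral>\<^sup>+x. ennreal (h x) \<partial>M) = (\<integral>\<^sup>+x. liminf (\<lambda>j. ennreal (F j x)) \<partial>M)"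
  proof (rule nn_integral_cong_AE)
    show "AE x in M. ennreal (h x) = liminf (\<lambda>j. ennreal (F j x))"
      using lim by eventually_elim (metis lim_imp_Liminf sequentially_bot tendsto_ennrealI)
  qed
  also have "\<dots> \<le> liminf (\<lambda>j. \<integral>\<^sup>+x. ennreal (F j x) \<partial>M)"
    by (rule nn_integral_liminf) measurable
  also have "\<dots> \<le> limsup (\<lambda>j. \<integral>\<^sup>+x. ennreal (F j x) \<partial>M)"
    by (rule Liminf_le_Limsup) simp
  also have "\<dots> \<le> ennreal e"
  proof (rule Limsup_bounded)
    show "\<forall>\<^sub>F j in sequentially. (\<integral>\<^sup>+x. ennreal (F j x) \<partial>M) \<le> ennreal e"
      using bound by eventually_elim (simp add: nn_integral_eq_integral[OF int] nonneg ennreal_leI)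
  qed
  finally have fin: "(\<integral>\<^sup>+x. ennreal (h x) \<partial>M) \<le> ennreal e" .
  have "(\<integral>\<^sup>+x. ennreal (norm (h x)) \<partial>M) = (\<integral>\<^sup>+x. ennreal (h x) \<partial>M)"
    using h_nonneg by (intro nn_integral_cong_AE) auto
  also have "\<dots> < \<infinity>" using fin by (simp add: le_less_trans)
  finally show hi: "integrable M h" by (intro integrableI_bounded) auto
  have "ennreal (\<integral>x. h x \<partial>M) \<le> ennreal e"
    using fin nn_integral_eq_integral[OF hi h_nonneg] by simp
  moreover have "0 \<le> e"
    using bound nonneg by (metis eventually_sequentially order.refl integral_nonneg_AE AE_I2 order.trans)
  ultimately show "(\<integral>x. h x \<partial>M) \<le> e" by (simp add: ennreal_le_iff)
qed

lemma square_integrable_of_diff: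
  fixes f g :: "'a \<Rightarrow> real"
  assumes "f \<in> borel_measurable M" "g \<in> borel_measurable M"
    and "integrable M (\<lambda>x. (f x)\<^sup>2)" "integrable M (\<lambda>x. (f x - g x)\<^sup>2)"
  shows "integrable M (\<lambda>x. (g x)\<^sup>2)"
proof (rule Bochner_Integration.integrable_bound)
  show "integrable M (\<lambda>x. 2 * (f x)\<^sup>2 + 2 * (f x - g x)\<^sup>2)" using assms by auto
  have "(g x)\<^sup>2 \<le> 2 * (f x)\<^sup>2 + 2 * (f x - g x)\<^sup>2" for x
    using zero_le_power2[of "2 * f x - g x"] by (simp add: power2_eq_square algebra_simps)
  thus "AE x in M. norm ((g x)\<^sup>2) \<le> norm (2 * (f x)\<^sup>2 + 2 * (f x - g x)\<^sup>2)" by simp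
qed (use assms in measurable)

lemma L2_dist_le_of_AE_limit:
  fixes f :: "nat \<Rightarrow> real \<Rightarrow> real"
  assumes f: "\<And>n. L2_on S (f n)" and [measurable]: "v \<in> borel_measurable lborel"
    and r: "strict_mono r" and conv: "AE x in lborel. (\<lambda>i. f (r i) x) \<longlonglongrightarrow> v x"
    and N: "\<forall>i\<ge>N. \<forall>j\<ge>N. (LINT x|lborel. (f i x - f j x)\<^sup>2) < e" and n: "N \<le> n"
  shows "integrable lborel (\<lambda>x. (f (r n) x - v x)\<^sup>2)" "(LINT x|lborel. (f (r n) x - v x)\<^sup>2) \<le> e"
proof -
  note [measurable] = L2_onD(1)[OF f]
  have ev: "eventually (\<lambda>j. (LINT x|lborel. (f (r n) x - f (r j) x)\<^sup>2) \<le> e) sequentially"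
  proof (rule eventually_sequentiallyI[of N])
    fix j assume "N \<le> j"
    hence "N \<le> r j" using seq_suble[OF r, of j] by simp
    moreover have "N \<le> r n" using n seq_suble[OF r, of n] by simp
    ultimately show "(LINT x|lborel. (f (r n) x - f (r j) x)\<^sup>2) \<le> e" using N by (simp add: less_imp_le)
  qed
  have lim: "AE x in lborel. (\<lambda>j. (f (r n) x - f (r j) x)\<^sup>2) \<longlonglongrightarrow> (f (r n) x - v x)\<^sup>2"
    using conv by eventually_elim (intro tendsto_intros)
  have "(\<lambda>x. (f (r n) x - v x)\<^sup>2) \<in> borel_measurable lborel" by measurable
  note Fatou = integral_le_of_AE_tendsto[OF _ this _ L2_onD(2)[OF L2_on_diff[OF f f]] lim ev]
  show "integrable lborel (\<lambda>x. (f (r n) x - v x)\<^sup>2)" "(LINT x|lborel. (f (r n) x - v x)\<^sup>2) \<le> e"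
    by (intro Fatou; measurable)+
qed

lemma L2_Cauchy_subseq_tendsto:
  fixes f :: "nat \<Rightarrow> real \<Rightarrow> real"
  assumes f: "\<And>n. L2_on {c..d} (f n)" and cd: "c \<le> d"
    and C: "\<And>e. e > 0 \<Longrightarrow> \<exists>N. \<forall>i\<ge>N. \<forall>j\<ge>N. (LINT x|lborel. (f i x - f j x)\<^sup>2) < e"
  obtains r v where "strict_mono r" "L2_on {c..d} v"
    "(\<lambda>n. LINT x|lborel. (f (r n) x - v x)\<^sup>2) \<longlonglongrightarrow> 0"
proof -
  note fm[measurable] = L2_onD(1)[OF f]
  have L1: "\<exists>N. \<forall>i\<ge>N. \<forall>j\<ge>N. (LINT x|lborel. norm (f i x - f j x)) < e" if "e > 0" for e
    by (rule L2_Cauchy_imp_L1_Cauchy[OF f cd _ that]) (rule C)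
  obtain r where r: "strict_mono r" and ae: "AE x in lborel. Cauchy (\<lambda>i. f (r i) x)"
    using cauchy_L1_AE_cauchy_subseq[OF L2_on_integrable[OF f] L1] by blast
  define v where "v x = lim (\<lambda>i. f (r i) x)" for x
  have vm[measurable]: "v \<in> borel_measurable lborel" unfolding v_def by measurable
  have conv: "AE x in lborel. (\<lambda>i. f (r i) x) \<longlonglongrightarrow> v x"
    using ae by eventually_elim (simp add: v_def Cauchy_convergent_iff convergent_LIMSEQ_iff)
  note close = L2_dist_le_of_AE_limit[OF f vm r conv]
  obtain N0 where "\<forall>i\<ge>N0. \<forall>j\<ge>N0. (LINT x|lborel. (f i x - f j x)\<^sup>2) < 1" using C[of 1] by auto
  hence N0: "integrable lborel (\<lambda>x. (f (r N0) x - v x)\<^sup>2)" using close(1) by blast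
  have "L2_on {c..d} v"
    unfolding L2_on_def
  proof (intro conjI allI impI vm)
    show "integrable lborel (\<lambda>x. (v x)\<^sup>2)"
      by (rule square_integrable_of_diff[OF fm vm L2_onD(2)[OF f] N0])
    show "v x = 0" if "x \<notin> {c..d}" for x
      unfolding v_def using L2_onD(3)[OF f that] by simp
  qed
  moreover have "(\<lambda>n. LINT x|lborel. (f (r n) x - v x)\<^sup>2) \<longlonglongrightarrow> 0"
  proof (rule LIMSEQ_I)
    fix e :: real assume e: "0 < e"
    obtain N where "\<forall>i\<ge>N. \<forall>j\<ge>N. (LINT x|lborel. (f i x - f j x)\<^sup>2) < e/2" using C[of "e/2"] e by auto
    hence "\<forall>n\<ge>N. (LINT x|lborel. (f (r n) x - v x)\<^sup>2) \<le> e/2" using close(2) by blast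
    thus "\<exists>N. \<forall>n\<ge>N. norm ((LINT x|lborel. (f (r n) x - v x)\<^sup>2) - 0) < e"
      using e by (auto intro!: exI[of _ N] simp: integral_nonneg_AE)
  qed
  ultimately show ?thesis using that r by blast
qed

lemma integral_weighted_square_ge:
  fixes a V :: "real \<Rightarrow> real"
  assumes a: "continuous_on UNIV a" and amin: "\<And>x. x \<in> {c..d} \<Longrightarrow> amin \<le> a x"
    and V: "L2_on {c..d} V"
  shows "amin * (LINT x|lborel. (V x)\<^sup>2) \<le> (LINT x|lborel. a x * (V x)\<^sup>2)"
proof -
  have "amin * (LINT x|lborel. (V x)\<^sup>2) = (LINT x|lborel. amin * (V x)\<^sup>2)" by simp
  also have "\<dots> \<le> (LINT x|lborel. a x * (V x)\<^sup>2)"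
  proof (rule integral_mono)
    show "integrable lborel (\<lambda>x. amin * (V x)\<^sup>2)" using L2_onD(2)[OF V] by simp
    show "integrable lborel (\<lambda>x. a x * (V x)\<^sup>2)"
      using L2_onD[OF V] by (intro integrable_continuous_mult[OF a]) auto
    show "amin * (V x)\<^sup>2 \<le> a x * (V x)\<^sup>2" for x
      using amin[of x] L2_onD(3)[OF V, of x] by (cases "x \<in> {c..d}") (auto intro: mult_right_mono)
  qed
  finally show ?thesis .
qed

lemma integral_weighted_abs_le:
  fixes a h :: "real \<Rightarrow> real"
  assumes a: "continuous_on UNIV a" and B: "\<And>x. x \<in> {c..d} \<Longrightarrow> \<bar>a x\<bar> \<le> B"
    and h: "integrable lborel h" and z: "\<And>x. x \<notin> {c..d} \<Longrightarrow> h x = 0"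
  shows "\<bar>LINT x|lborel. a x * h x\<bar> \<le> B * (LINT x|lborel. \<bar>h x\<bar>)"
proof -
  have "\<bar>LINT x|lborel. a x * h x\<bar> \<le> (LINT x|lborel. B * \<bar>h x\<bar>)"
  proof (rule integral_abs_bound_integral)
    show "integrable lborel (\<lambda>x. a x * h x)" by (rule integrable_continuous_mult[OF a h z])
    show "integrable lborel (\<lambda>x. B * \<bar>h x\<bar>)" using h by auto
    show "\<bar>a x * h x\<bar> \<le> B * \<bar>h x\<bar>" for x
      using B[of x] z[of x] by (cases "x \<in> {c..d}") (auto simp: abs_mult mult_right_mono)
  qed
  thus ?thesis by simp
qed

lemma weighted_integral_square_diff_le:
  fixes a f g :: "real \<Rightarrow> real"
  assumes a: "continuous_on UNIV a" and B: "\<And>x. x \<in> {c..d} \<Longrightarrow> \<bar>a x\<bar> \<le> B" "0 \<le> B"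
    and f: "L2_on {c..d} f" and g: "L2_on {c..d} g"
  shows "\<bar>(LINT x|lborel. a x * (f x)\<^sup>2) - (LINT x|lborel. a x * (g x)\<^sup>2)\<bar>
    \<le> B * (LINT x|lborel. (f x - g x)\<^sup>2)
      + 2 * B * (sqrt (LINT x|lborel. (g x)\<^sup>2) * sqrt (LINT x|lborel. (f x - g x)\<^sup>2))"
proof -
  note fk = L2_onD[OF f] and gk = L2_onD[OF g] and dk = L2_onD[OF L2_on_diff[OF f g]]
  have iprod: "integrable lborel (\<lambda>x. g x * (f x - g x))"
    by (rule integrable_mult_square_integrable[OF gk(1) dk(1) gk(2) dk(2)])
  have iw: "integrable lborel (\<lambda>x. a x * h x)"
    if "integrable lborel h" "\<And>x. x \<notin> {c..d} \<Longrightarrow> h x = 0" for h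
    by (rule integrable_continuous_mult[OF a that])
  have "(LINT x|lborel. a x * (f x)\<^sup>2) - (LINT x|lborel. a x * (g x)\<^sup>2)
      = (LINT x|lborel. a x * (f x)\<^sup>2 - a x * (g x)\<^sup>2)"
    by (rule Bochner_Integration.integral_diff[symmetric]; rule iw) (use fk(2,3) gk(2,3) in auto)
  also have "\<dots> = (LINT x|lborel. a x * (f x - g x)\<^sup>2 + 2 * (a x * (g x * (f x - g x))))"
    by (rule Bochner_Integration.integral_cong) (simp_all add: power2_eq_square algebra_simps)
  also have "\<dots> = (LINT x|lborel. a x * (f x - g x)\<^sup>2) + 2 * (LINT x|lborel. a x * (g x * (f x - g x)))"
    using iw[OF dk(2)] iw[OF iprod] dk(3) gk(3) by simp
  finally have split: "(LINT x|lborel. a x * (f x)\<^sup>2) - (LINT x|lborel. a x * (g x)\<^sup>2)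
      = (LINT x|lborel. a x * (f x - g x)\<^sup>2) + 2 * (LINT x|lborel. a x * (g x * (f x - g x)))" .
  have b1: "\<bar>LINT x|lborel. a x * (f x - g x)\<^sup>2\<bar> \<le> B * (LINT x|lborel. (f x - g x)\<^sup>2)"
    using integral_weighted_abs_le[OF a B(1) dk(2)] dk(3) by simp
  have "\<bar>LINT x|lborel. a x * (g x * (f x - g x))\<bar> \<le> B * (LINT x|lborel. \<bar>g x * (f x - g x)\<bar>)"
    using integral_weighted_abs_le[OF a B(1) iprod] gk(3) by simp
  also have "\<dots> \<le> B * (sqrt (LINT x|lborel. (g x)\<^sup>2) * sqrt (LINT x|lborel. (f x - g x)\<^sup>2))"
    by (rule mult_left_mono[OF integral_abs_mult_le_sqrt[OF gk(1) dk(1) gk(2) dk(2)] B(2)])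
  finally have b2: "\<bar>LINT x|lborel. a x * (g x * (f x - g x))\<bar>
      \<le> B * (sqrt (LINT x|lborel. (g x)\<^sup>2) * sqrt (LINT x|lborel. (f x - g x)\<^sup>2))" .
  have "\<bar>(LINT x|lborel. a x * (f x)\<^sup>2) - (LINT x|lborel. a x * (g x)\<^sup>2)\<bar>
      \<le> \<bar>LINT x|lborel. a x * (f x - g x)\<^sup>2\<bar> + 2 * \<bar>LINT x|lborel. a x * (g x * (f x - g x))\<bar>"
    unfolding split by (rule order_trans[OF abs_triangle_ineq]) (simp add: abs_mult)
  thus ?thesis using b1 b2 by linarith
qed

lemma weighted_integral_square_tendsto:
  fixes a v :: "real \<Rightarrow> real" and F :: "nat \<Rightarrow> real \<Rightarrow> real"
  assumes a: "continuous_on UNIV a" and F: "\<And>k. L2_on {c..d} (F k)" and v: "L2_on {c..d} v"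
    and D: "(\<lambda>k. LINT x|lborel. (F k x - v x)\<^sup>2) \<longlonglongrightarrow> 0"
  shows "(\<lambda>k. LINT x|lborel. a x * (F k x)\<^sup>2) \<longlonglongrightarrow> (LINT x|lborel. a x * (v x)\<^sup>2)"
proof -
  have "compact {c..d}" "continuous_on {c..d} a"
    using continuous_on_subset[OF a] by auto
  then obtain B where "0 \<le> B" and B: "\<And>x. x \<in> {c..d} \<Longrightarrow> norm (a x) \<le> B"
    by (rule continuous_on_compact_bound) blast
  define Dk where "Dk k = (LINT x|lborel. (F k x - v x)\<^sup>2)" for k
  have "\<forall>k. norm ((LINT x|lborel. a x * (F k x)\<^sup>2) - (LINT x|lborel. a x * (v x)\<^sup>2))
      \<le> B * Dk k + 2 * B * (sqrt (LINT x|lborel. (v x)\<^sup>2) * sqrt (Dk k))"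
    using weighted_integral_square_diff_le[OF a _ \<open>0 \<le> B\<close> F v] B unfolding Dk_def by simp
  moreover have "(\<lambda>k. B * Dk k + 2 * B * (sqrt (LINT x|lborel. (v x)\<^sup>2) * sqrt (Dk k))) \<longlonglongrightarrow> 0"
  proof -
    have D': "Dk \<longlonglongrightarrow> 0" using D unfolding Dk_def .
    have "(\<lambda>k. sqrt (Dk k)) \<longlonglongrightarrow> 0" using tendsto_real_sqrt[OF D'] by simp
    thus ?thesis
      by (intro tendsto_add_zero tendsto_mult_right_zero D')
  qed
  ultimately have "(\<lambda>k. (LINT x|lborel. a x * (F k x)\<^sup>2) - (LINT x|lborel. a x * (v x)\<^sup>2)) \<longlonglongrightarrow> 0"
    by (rule Lim_null_comparison[OF always_eventually])
  thus ?thesis by (rule LIM_zero_cancel)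
qed

lemma set_integral_tendsto_of_L2:
  fixes v :: "real \<Rightarrow> real" and F :: "nat \<Rightarrow> real \<Rightarrow> real"
  assumes F: "\<And>k. L2_on {c..d} (F k)" and v: "L2_on {c..d} v" and cd: "c \<le> d"
    and D: "(\<lambda>k. LINT x|lborel. (F k x - v x)\<^sup>2) \<longlonglongrightarrow> 0"
    and A: "A \<in> sets borel"
  shows "(\<lambda>k. LINT x|lborel. indicator A x * F k x) \<longlonglongrightarrow> (LINT x|lborel. indicator A x * v x)"
proof -
  have iA: "integrable lborel (\<lambda>x. indicator A x * h x)" if "L2_on {c..d} h" for h
    using integrable_mult_indicator[of A lborel h] A L2_on_integrable[OF that] by simp
  have bnd: "\<bar>(LINT x|lborel. indicator A x * F k x) - (LINT x|lborel. indicator A x * v x)\<bar>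
      \<le> sqrt (d - c) * sqrt (LINT x|lborel. (F k x - v x)\<^sup>2)" for k
  proof -
    have "\<bar>(LINT x|lborel. indicator A x * F k x) - (LINT x|lborel. indicator A x * v x)\<bar>
        = \<bar>LINT x|lborel. indicator A x * (F k x - v x)\<bar>"
      using iA[OF F] iA[OF v] by (simp add: right_diff_distrib)
    also have "\<dots> \<le> (LINT x|lborel. \<bar>F k x - v x\<bar>)"
      using iA[OF L2_on_diff[OF F v]] L2_on_integrable[OF L2_on_diff[OF F v]]
      by (intro integral_abs_bound_integral) (auto simp: indicator_def)
    also have "\<dots> \<le> sqrt (d - c) * sqrt (LINT x|lborel. (F k x - v x)\<^sup>2)"
      by (rule integral_abs_le_sqrt_length[OF L2_on_diff[OF F v] cd])
    finally show ?thesis .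
  qed
  have "\<forall>k. norm ((LINT x|lborel. indicator A x * F k x) - (LINT x|lborel. indicator A x * v x))
      \<le> sqrt (d - c) * sqrt (LINT x|lborel. (F k x - v x)\<^sup>2)"
    using bnd by simp
  moreover have "(\<lambda>k. sqrt (d - c) * sqrt (LINT x|lborel. (F k x - v x)\<^sup>2)) \<longlonglongrightarrow> 0"
    using tendsto_real_sqrt[OF D] by (intro tendsto_mult_right_zero) simp
  ultimately have "(\<lambda>k. (LINT x|lborel. indicator A x * F k x) - (LINT x|lborel. indicator A x * v x)) \<longlonglongrightarrow> 0"
    by (rule Lim_null_comparison[OF always_eventually])
  thus ?thesis by (rule LIM_zero_cancel)
qed

lemma set_integral_square_tendsto_of_uniform_limit:
  fixes f :: "nat \<Rightarrow> real \<Rightarrow> real"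
  assumes lim: "uniform_limit {c..d} f g sequentially"
    and f: "\<And>k. continuous_on {c..d} (f k)" and g: "continuous_on {c..d} g"
  shows "(\<lambda>k. LINT x:{c..d}|lborel. (f k x - g x)\<^sup>2) \<longlonglongrightarrow> 0"
proof (rule LIMSEQ_I)
  fix e :: real assume e: "0 < e"
  define \<epsilon> where "\<epsilon> = sqrt (e / (\<bar>d - c\<bar> + 1))"
  have \<epsilon>: "0 < \<epsilon>" using e by (simp add: \<epsilon>_def add_nonneg_pos)
  obtain N where N: "\<forall>n\<ge>N. \<forall>x\<in>{c..d}. dist (f n x) (g x) < \<epsilon>"
    using lim \<epsilon> unfolding uniform_limit_sequentially_iff by blast
  have "\<bar>LINT x:{c..d}|lborel. (f n x - g x)\<^sup>2\<bar> < e" if n: "N \<le> n" for n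
  proof -
    have int: "set_integrable lborel {c..d} (\<lambda>x. (f n x - g x)\<^sup>2)"
      by (intro borel_integrable_atLeastAtMost' continuous_intros f g)
    have "\<bar>LINT x:{c..d}|lborel. (f n x - g x)\<^sup>2\<bar> = (LINT x:{c..d}|lborel. (f n x - g x)\<^sup>2)"
      by (simp add: set_lebesgue_integral_def integral_nonneg_AE)
    also have "\<dots> \<le> (LINT x:{c..d}|lborel. \<epsilon>\<^sup>2)"
    proof (rule set_integral_mono[OF int])
      show "set_integrable lborel {c..d} (\<lambda>x. \<epsilon>\<^sup>2)"
        using integrable_indicator_Icc_mult[of c d "\<epsilon>\<^sup>2"] by (simp add: set_integrable_def)
      fix x assume "x \<in> {c..d}"
      hence "\<bar>f n x - g x\<bar> < \<epsilon>" using N n by (simp add: dist_real_def)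
      thus "(f n x - g x)\<^sup>2 \<le> \<epsilon>\<^sup>2" using power_mono[of "\<bar>f n x - g x\<bar>" \<epsilon> 2] by simp
    qed
    also have "\<dots> = measure lborel {c..d} * \<epsilon>\<^sup>2"
      by (simp add: set_integral_const emeasure_lborel_Icc_eq)
    also have "\<dots> \<le> \<epsilon>\<^sup>2 * \<bar>d - c\<bar>"
      by (cases "c \<le> d") simp_all
    also have "\<dots> < e"
      using e by (simp add: \<epsilon>_def field_simps)
    finally show ?thesis .
  qed
  thus "\<exists>N. \<forall>n\<ge>N. norm ((LINT x:{c..d}|lborel. (f n x - g x)\<^sup>2) - 0) < e" by auto
qed

lemma nn_integral_ray_pos_neg_eq:
  fixes h :: "real \<Rightarrow> real"
  assumes int: "integrable lborel h" and z: "(LINT x|lborel. indicator {c<..} x * h x) = 0"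
  shows "(\<integral>\<^sup>+x. ennreal (h x) * indicator {c<..} x \<partial>lborel)
      = (\<integral>\<^sup>+x. ennreal (- h x) * indicator {c<..} x \<partial>lborel)"
    and "(\<integral>\<^sup>+x. ennreal (h x) * indicator {c<..} x \<partial>lborel) < \<infinity>"
proof -
  define f1 where "f1 x = indicator {c<..} x * max 0 (h x)" for x
  define f2 where "f2 x = indicator {c<..} x * max 0 (- h x)" for x
  have i1: "integrable lborel f1" unfolding f1_def
    using int by (intro integrable_mult_indicator[of _ _ "\<lambda>x. max 0 (h x)", simplified]) auto
  have i2: "integrable lborel f2" unfolding f2_def
    using int by (intro integrable_mult_indicator[of _ _ "\<lambda>x. max 0 (- h x)", simplified]) auto
  have "ennreal (h x) * indicator {c<..} x = ennreal (f1 x)"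
    "ennreal (- h x) * indicator {c<..} x = ennreal (f2 x)" for x
    unfolding f1_def f2_def by (cases "x \<in> {c<..}"; cases "h x \<ge> 0"; simp add: ennreal_neg)+
  moreover have "0 \<le> f1 x" "0 \<le> f2 x" for x by (simp_all add: f1_def f2_def)
  ultimately have n: "(\<integral>\<^sup>+x. ennreal (h x) * indicator {c<..} x \<partial>lborel) = ennreal (LINT x|lborel. f1 x)"
    "(\<integral>\<^sup>+x. ennreal (- h x) * indicator {c<..} x \<partial>lborel) = ennreal (LINT x|lborel. f2 x)"
    using nn_integral_eq_integral[OF i1] nn_integral_eq_integral[OF i2] by simp_all
  have "(LINT x|lborel. f1 x) - (LINT x|lborel. f2 x) = (LINT x|lborel. indicator {c<..} x * h x)"
    by (subst Bochner_Integration.integral_diff[OF i1 i2, symmetric])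
      (auto intro!: Bochner_Integration.integral_cong simp: f1_def f2_def indicator_def)
  thus "(\<integral>\<^sup>+x. ennreal (h x) * indicator {c<..} x \<partial>lborel)
      = (\<integral>\<^sup>+x. ennreal (- h x) * indicator {c<..} x \<partial>lborel)"
    and "(\<integral>\<^sup>+x. ennreal (h x) * indicator {c<..} x \<partial>lborel) < \<infinity>"
    using z n by simp_all
qed

text \<open>The positive and negative parts of \<open>h\<close> are densities of finite measures that agree on
  all rays \<open>{c<..}\<close>, and rays generate the Borel sets.\<close>

lemma AE_zero_of_ray_integrals:
  fixes h :: "real \<Rightarrow> real"
  assumes int: "integrable lborel h" and z: "\<And>c. (LINT x|lborel. indicator {c<..} x * h x) = 0"
  shows "AE x in lborel. h x = 0"
proof -
  have [measurable]: "h \<in> borel_measurable lborel" using int by auto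
  define p where "p x = ennreal (h x)" for x
  define q where "q x = ennreal (- h x)" for x
  have [measurable]: "p \<in> borel_measurable lborel" "q \<in> borel_measurable lborel"
    unfolding p_def q_def by measurable
  note rays = nn_integral_ray_pos_neg_eq[OF int z, folded p_def q_def]
  have dq: "density lborel p = density lborel q"
  proof (rule measure_eqI_lessThan)
    fix c
    show "emeasure (density lborel p) {c<..} < \<infinity>"
      using rays(2)[of c] by (subst emeasure_density) auto
    show "emeasure (density lborel p) {c<..} = emeasure (density lborel q) {c<..}"
      using rays(1)[of c] by (simp add: emeasure_density)
  qed auto
  have "AE x in lborel. p x = q x"
  proof (rule sigma_finite_measure.density_unique2[OF sigma_finite_lborel])
    fix A :: "real set" assume "A \<in> sets lborel"
    thus "(\<integral>\<^sup>+x\<in>A. p x \<partial>lborel) = (\<integral>\<^sup>+x\<in>A. q x \<partial>lborel)"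
      using dq emeasure_density[of p lborel A] emeasure_density[of q lborel A] by simp
  qed auto
  thus ?thesis
  proof eventually_elim
    case (elim x) thus "h x = 0" unfolding p_def q_def by (cases "h x \<ge> 0") (auto simp: ennreal_neg)
  qed
qed

section \<open>Weak derivatives on [-L, L]\<close>

text \<open>\<^const>\<open>is_wderiv\<close> constrains \<open>v\<close> only on \<open>[-L, L]\<close>, so we work with its zero extension
  \<open>indicator {-L..L} x * v x\<close>, which is unique almost everywhere.\<close>

lemma is_wderiv_iff:
  "is_wderiv L u v \<longleftrightarrow> L2_on {-L..L} (\<lambda>x. indicator {-L..L} x * v x) \<and>
     (\<forall>x\<in>{-L..L}. u x = u (-L) + (LINT t|lborel. indicator {-L..x} t * v t))"
  unfolding is_wderiv_def L2_on_def set_borel_measurable_def set_integrable_def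
    set_lebesgue_integral_def indicator_square_eq
  by auto

lemma is_wderiv_L2_on: "is_wderiv L u v \<Longrightarrow> L2_on {-L..L} (\<lambda>x. indicator {-L..L} x * v x)"
  unfolding is_wderiv_iff by blast

lemma is_wderiv_eq:
  assumes "is_wderiv L u v" and "x \<in> {-L..L}"
  shows "u x = u (-L) + (LINT t|lborel. indicator {-L..x} t * v t)"
  using assms unfolding is_wderiv_iff by blast

lemma is_wderiv_integrable_on:
  assumes w: "is_wderiv L u v" and S: "S \<subseteq> {-L..L}" "S \<in> sets borel"
  shows "integrable lborel (\<lambda>t. indicator S t * v t)"
proof -
  have "integrable lborel (\<lambda>t. indicator S t * (indicator {-L..L} t * v t))"
    using integrable_mult_indicator[OF _ L2_on_integrable[OF is_wderiv_L2_on[OF w]], of S] S by simp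
  moreover have "indicator S t * (indicator {-L..L} t * v t) = indicator S t * v t" for t
    using S by (auto simp: indicator_def)
  ultimately show ?thesis by simp
qed

lemma is_wderiv_diff_eq:
  assumes w: "is_wderiv L u v" and yx: "-L \<le> y" "y \<le> x" "x \<le> L"
  shows "u x - u y = (LINT t|lborel. indicator {y<..x} t * v t)"
proof -
  have "u x - u y = (LINT t|lborel. indicator {-L..x} t * v t) - (LINT t|lborel. indicator {-L..y} t * v t)"
    using is_wderiv_eq[OF w, of x] is_wderiv_eq[OF w, of y] yx by simp
  also have "\<dots> = (LINT t|lborel. indicator {-L..x} t * v t - indicator {-L..y} t * v t)"
    using yx by (intro Bochner_Integration.integral_diff[symmetric] is_wderiv_integrable_on[OF w]) auto
  also have "\<dots> = (LINT t|lborel. indicator {y<..x} t * v t)"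
    using yx by (intro Bochner_Integration.integral_cong) (auto simp: indicator_def)
  finally show ?thesis .
qed

lemma is_wderiv_holder:
  assumes w: "is_wderiv L u v" and x: "x \<in> {-L..L}" and y: "y \<in> {-L..L}"
  shows "\<bar>u x - u y\<bar> \<le> sqrt \<bar>x - y\<bar> * sqrt (LINT t|lborel. (indicator {-L..L} t * v t)\<^sup>2)"
proof -
  have ordered: "\<bar>u x - u y\<bar> \<le> sqrt (x - y) * sqrt (LINT t|lborel. (indicator {-L..L} t * v t)\<^sup>2)"
    if w: "is_wderiv L u v" and yx: "-L \<le> y" "y \<le> x" "x \<le> L" for u v x y
  proof -
    define h where "h t = indicator {y<..x} t * (indicator {-L..L} t * v t)" for t
    have h_eq: "h t = indicator {y<..x} t * v t" for t
      using yx by (auto simp: h_def indicator_def)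
    have h: "L2_on {y..x} h"
      unfolding h_def by (rule L2_on_mono[OF L2_on_indicator_mult[OF is_wderiv_L2_on[OF w]]]) auto
    have "\<bar>u x - u y\<bar> = \<bar>LINT t|lborel. h t\<bar>"
      using is_wderiv_diff_eq[OF w yx] by (simp add: h_eq)
    also have "\<dots> \<le> (LINT t|lborel. \<bar>h t\<bar>)"
      by (rule integral_abs_bound)
    also have "\<dots> \<le> sqrt (x - y) * sqrt (LINT t|lborel. (h t)\<^sup>2)"
      by (rule integral_abs_le_sqrt_length[OF h \<open>y \<le> x\<close>])
    also have "\<dots> \<le> sqrt (x - y) * sqrt (LINT t|lborel. (indicator {-L..L} t * v t)\<^sup>2)"
    proof (intro mult_left_mono real_sqrt_le_mono)
      show "(LINT t|lborel. (h t)\<^sup>2) \<le> (LINT t|lborel. (indicator {-L..L} t * v t)\<^sup>2)"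
        using L2_onD(2)[OF h] L2_onD(2)[OF is_wderiv_L2_on[OF w]]
        by (intro integral_mono) (auto simp: h_def indicator_def)
    qed (use yx in simp)
    finally show ?thesis .
  qed
  show ?thesis
  proof (cases "y \<le> x")
    case True thus ?thesis using ordered[OF w] x y by simp
  next
    case False thus ?thesis using ordered[OF w, of x y] x y by (simp add: abs_minus_commute)
  qed
qed

lemma is_wderiv_equicontinuous:
  assumes e: "0 < e" and K: "0 \<le> K"
  obtains d where "d > 0"
    "\<And>u v x y. is_wderiv L u v \<Longrightarrow> (LINT t|lborel. (indicator {-L..L} t * v t)\<^sup>2) \<le> K \<Longrightarrow>
       x \<in> {-L..L} \<Longrightarrow> y \<in> {-L..L} \<Longrightarrow> \<bar>x - y\<bar> < d \<Longrightarrow> \<bar>u x - u y\<bar> < e"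
proof
  define s where "s = e / (sqrt K + 1)"
  have s: "0 < s" unfolding s_def using e K by (intro divide_pos_pos add_nonneg_pos) auto
  show "0 < s\<^sup>2" using s by simp
  fix u v x y
  assume w: "is_wderiv L u v" and vK: "(LINT t|lborel. (indicator {-L..L} t * v t)\<^sup>2) \<le> K"
    and x: "x \<in> {-L..L}" and y: "y \<in> {-L..L}" and xy: "\<bar>x - y\<bar> < s\<^sup>2"
  have "sqrt \<bar>x - y\<bar> < s" using real_sqrt_less_mono[OF xy] s by simp
  have "\<bar>u x - u y\<bar> \<le> sqrt \<bar>x - y\<bar> * sqrt (LINT t|lborel. (indicator {-L..L} t * v t)\<^sup>2)"
    by (rule is_wderiv_holder[OF w x y])
  also have "\<dots> \<le> sqrt \<bar>x - y\<bar> * sqrt K"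
    using vK by (intro mult_left_mono real_sqrt_le_mono) auto
  also have "\<dots> \<le> s * sqrt K"
    using \<open>sqrt \<bar>x - y\<bar> < s\<close> K by (intro mult_right_mono) auto
  also have "\<dots> = e * (sqrt K / (sqrt K + 1))" by (simp add: s_def)
  also have "\<dots> < e"
  proof -
    have "0 < sqrt K + 1" using K by (simp add: add_nonneg_pos)
    hence "sqrt K / (sqrt K + 1) < 1" by simp
    hence "e * (sqrt K / (sqrt K + 1)) < e * 1" using e by (rule mult_strict_left_mono)
    thus ?thesis by (simp only: mult_1_right)
  qed
  finally show "\<bar>u x - u y\<bar> < e" .
qed

lemma is_wderiv_continuous:
  assumes w: "is_wderiv L u v"
  shows "continuous_on {-L..L} u"
  unfolding continuous_on_iff
proof (intro ballI allI impI)
  fix x e :: real assume x: "x \<in> {-L..L}" and e: "0 < e"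
  have "0 \<le> (LINT t|lborel. (indicator {-L..L} t * v t)\<^sup>2)" by (simp add: integral_nonneg_AE)
  then obtain d where "d > 0" and d: "\<And>u' v' x y. is_wderiv L u' v' \<Longrightarrow>
      (LINT t|lborel. (indicator {-L..L} t * v' t)\<^sup>2) \<le> (LINT t|lborel. (indicator {-L..L} t * v t)\<^sup>2) \<Longrightarrow>
       x \<in> {-L..L} \<Longrightarrow> y \<in> {-L..L} \<Longrightarrow> \<bar>x - y\<bar> < d \<Longrightarrow> \<bar>u' x - u' y\<bar> < e"
    by (rule is_wderiv_equicontinuous[where L=L, OF e]) blast
  thus "\<exists>d>0. \<forall>y\<in>{-L..L}. dist y x < d \<longrightarrow> dist (u y) (u x) < e"
    using d[OF w order.refl _ x] by (auto simp: dist_real_def)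
qed

lemma is_wderiv_lincomb:
  assumes w1: "is_wderiv L u1 v1" and w2: "is_wderiv L u2 v2"
  shows "is_wderiv L (\<lambda>x. \<alpha> * u1 x + \<beta> * u2 x) (\<lambda>x. \<alpha> * v1 x + \<beta> * v2 x)"
  unfolding is_wderiv_iff
proof (intro conjI ballI)
  have "(\<lambda>x. indicator {-L..L} x * (\<alpha> * v1 x + \<beta> * v2 x))
      = (\<lambda>x. \<alpha> * (indicator {-L..L} x * v1 x) + \<beta> * (indicator {-L..L} x * v2 x))"
    by (simp add: fun_eq_iff algebra_simps)
  thus "L2_on {-L..L} (\<lambda>x. indicator {-L..L} x * (\<alpha> * v1 x + \<beta> * v2 x))"
    using L2_on_lincomb[OF is_wderiv_L2_on[OF w1] is_wderiv_L2_on[OF w2]] by simp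
  fix x assume x: "x \<in> {-L..L}"
  have i: "integrable lborel (\<lambda>t. indicator {-L..x} t * v1 t)" "integrable lborel (\<lambda>t. indicator {-L..x} t * v2 t)"
    using x by (auto intro: is_wderiv_integrable_on[OF w1] is_wderiv_integrable_on[OF w2])
  have "(LINT t|lborel. indicator {-L..x} t * (\<alpha> * v1 t + \<beta> * v2 t))
      = \<alpha> * (LINT t|lborel. indicator {-L..x} t * v1 t) + \<beta> * (LINT t|lborel. indicator {-L..x} t * v2 t)"
    using i by (simp add: algebra_simps)
  thus "\<alpha> * u1 x + \<beta> * u2 x = \<alpha> * u1 (-L) + \<beta> * u2 (-L) + (LINT t|lborel. indicator {-L..x} t * (\<alpha> * v1 t + \<beta> * v2 t))"
    using is_wderiv_eq[OF w1 x] is_wderiv_eq[OF w2 x] by (simp add: algebra_simps)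
qed

lemma is_wderiv_add:
  "is_wderiv L u1 v1 \<Longrightarrow> is_wderiv L u2 v2 \<Longrightarrow> is_wderiv L (\<lambda>x. u1 x + u2 x) (\<lambda>x. v1 x + v2 x)"
  using is_wderiv_lincomb[of L u1 v1 u2 v2 1 1] by simp

lemma is_wderiv_linear: "is_wderiv L (\<lambda>x. c * x) (\<lambda>x. c)"
  unfolding is_wderiv_iff L2_on_def indicator_square_eq
proof (intro conjI allI impI ballI)
  show "integrable lborel (\<lambda>x. indicator {-L..L} x *\<^sub>R c\<^sup>2)"
    using integrable_indicator_Icc_mult[of "-L" L "c\<^sup>2"] by simp
  fix x :: real assume "x \<in> {-L..L}"
  thus "c * x = c * - L + (LINT t|lborel. indicator {-L..x} t * c)"
    by (simp add: algebra_simps)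
qed simp_all

lemma is_wderiv_add_linear: "is_wderiv L u v \<Longrightarrow> is_wderiv L (\<lambda>x. u x + c * x) (\<lambda>x. v x + c)"
  using is_wderiv_add[OF _ is_wderiv_linear] .

lemma H1m_add_linear:
  assumes "H1m L m u" and "0 < L"
  shows "H1m L (m + d) (\<lambda>x. u x + d / L * x)"
proof -
  obtain v where "is_wderiv L u v" using assms(1) unfolding H1m_def H1_def by blast
  hence "H1 L (\<lambda>x. u x + d / L * x)"
    unfolding H1_def by (blast intro: is_wderiv_add_linear)
  thus ?thesis using assms unfolding H1m_def by simp
qed

lemma is_wderiv_ray_integral:
  assumes w: "is_wderiv L u v" and L: "-L \<le> L"
  shows "(LINT x|lborel. indicator {c<..} x * (indicator {-L..L} x * v x))
    = (if c \<le> L then u L - u (max c (-L)) else 0)"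
proof (cases "c < -L")
  case True
  hence "(\<lambda>x. indicator {c<..} x * (indicator {-L..L} x * v x)) = (\<lambda>x. indicator {-L..L} x * v x)"
    by (auto simp: fun_eq_iff indicator_def)
  thus ?thesis using True L is_wderiv_eq[OF w, of L] by simp
next
  case False
  show ?thesis
  proof (cases "c \<le> L")
    case True
    have "(\<lambda>x. indicator {c<..} x * (indicator {-L..L} x * v x)) = (\<lambda>x. indicator {c<..L} x * v x)"
      using False by (auto simp: fun_eq_iff indicator_def)
    thus ?thesis using True False is_wderiv_diff_eq[OF w, of c L] by simp
  next
    case c: False
    hence "(\<lambda>x. indicator {c<..} x * (indicator {-L..L} x * v x)) = (\<lambda>x. 0)"
      by (auto simp: fun_eq_iff indicator_def)
    thus ?thesis using c by simp
  qed
qed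

lemma is_wderiv_unique_AE:
  assumes w1: "is_wderiv L u v1" and w2: "is_wderiv L u v2"
  shows "AE x in lborel. indicator {-L..L} x * v1 x = indicator {-L..L} x * v2 x"
proof (cases "-L \<le> L")
  case True
  let ?h = "\<lambda>x. indicator {-L..L} x * v1 x - indicator {-L..L} x * v2 x"
  have int: "integrable lborel (\<lambda>x. indicator {-L..L} x * v x)" if "is_wderiv L u v" for v
    using L2_on_integrable[OF is_wderiv_L2_on[OF that]] .
  have "AE x in lborel. ?h x = 0"
  proof (rule AE_zero_of_ray_integrals)
    show "integrable lborel ?h" using int[OF w1] int[OF w2] by simp
    fix c
    have "(LINT x|lborel. indicator {c<..} x * ?h x)
        = (LINT x|lborel. indicator {c<..} x * (indicator {-L..L} x * v1 x))
          - (LINT x|lborel. indicator {c<..} x * (indicator {-L..L} x * v2 x))"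
      using integrable_mult_indicator[OF _ int[OF w1], of "{c<..}"]
        integrable_mult_indicator[OF _ int[OF w2], of "{c<..}"]
      by (simp add: right_diff_distrib)
    thus "(LINT x|lborel. indicator {c<..} x * ?h x) = 0"
      using is_wderiv_ray_integral[OF w1 True] is_wderiv_ray_integral[OF w2 True] by simp
  qed
  thus ?thesis by eventually_elim simp
qed simp

lemma is_wderiv_uniform_subseq:
  fixes u v :: "nat \<Rightarrow> real \<Rightarrow> real"
  assumes w: "\<And>k. is_wderiv L (u k) (v k)"
    and K: "\<And>k. (LINT t|lborel. (indicator {-L..L} t * v k t)\<^sup>2) \<le> K"
    and B: "\<And>k. \<bar>u k (-L)\<bar> \<le> B"
  obtains g r where "continuous_on {-L..L} g" "strict_mono r"
    "uniform_limit {-L..L} (\<lambda>k. u (r k)) g sequentially"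
proof -
  have K0: "0 \<le> K" by (rule order_trans[OF integral_nonneg_AE K[of 0]]) simp
  have bound: "norm (u k x) \<le> B + sqrt (2 * \<bar>L\<bar>) * sqrt K" if x: "x \<in> {-L..L}" for k x
  proof -
    have "\<bar>u k x - u k (-L)\<bar> \<le> sqrt \<bar>x - -L\<bar> * sqrt (LINT t|lborel. (indicator {-L..L} t * v k t)\<^sup>2)"
      using x by (intro is_wderiv_holder[OF w]) auto
    also have "\<dots> \<le> sqrt (2 * \<bar>L\<bar>) * sqrt K"
      using x K[of k] by (intro mult_mono real_sqrt_le_mono) auto
    finally show ?thesis using B[of k] by simp
  qed
  have equi: "\<exists>d. 0 < d \<and> (\<forall>n y. y \<in> {-L..L} \<and> norm (x - y) < d \<longrightarrow> norm (u n x - u n y) < e)"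
    if x: "x \<in> {-L..L}" and e: "0 < e" for x e
  proof -
    obtain d where "d > 0" and d: "\<And>u' v' x y. is_wderiv L u' v' \<Longrightarrow>
        (LINT t|lborel. (indicator {-L..L} t * v' t)\<^sup>2) \<le> K \<Longrightarrow>
        x \<in> {-L..L} \<Longrightarrow> y \<in> {-L..L} \<Longrightarrow> \<bar>x - y\<bar> < d \<Longrightarrow> \<bar>u' x - u' y\<bar> < e"
      by (rule is_wderiv_equicontinuous[where L=L, OF e K0]) blast
    thus ?thesis using d[OF w K x] by (auto intro!: exI[of _ d])
  qed
  show ?thesis
  proof (rule Arzela_Ascoli[of "{-L..L}" u "B + sqrt (2 * \<bar>L\<bar>) * sqrt K"])
    fix g and r :: "nat \<Rightarrow> nat"
    assume g: "continuous_on {-L..L} g" and r: "strict_mono r"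
      and conv: "\<And>e. 0 < e \<Longrightarrow> \<exists>N. \<forall>n x. n \<ge> N \<and> x \<in> {-L..L} \<longrightarrow> norm (u (r n) x - g x) < e"
    have "uniform_limit {-L..L} (\<lambda>k. u (r k)) g sequentially"
      unfolding uniform_limit_sequentially_iff dist_real_def
    proof (intro allI impI)
      fix e :: real assume "0 < e"
      then obtain N where "\<forall>n x. n \<ge> N \<and> x \<in> {-L..L} \<longrightarrow> norm (u (r n) x - g x) < e"
        using conv by blast
      thus "\<exists>N. \<forall>n\<ge>N. \<forall>x\<in>{-L..L}. \<bar>u (r n) x - g x\<bar> < e" by (auto intro!: exI[of _ N])
    qed
    thus thesis using that g r by blast
  qed (use bound equi in auto)
qed

lemma is_wderiv_limit:
  fixes u v :: "nat \<Rightarrow> real \<Rightarrow> real"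
  assumes w: "\<And>k. is_wderiv L (u k) (v k)"
    and lim: "\<And>x. x \<in> {-L..L} \<Longrightarrow> (\<lambda>k. u k x) \<longlonglongrightarrow> g x"
    and W: "L2_on {-L..L} W"
    and D: "(\<lambda>k. LINT x|lborel. (indicator {-L..L} x * v k x - W x)\<^sup>2) \<longlonglongrightarrow> 0"
    and L: "-L \<le> L"
  shows "is_wderiv L g W"
  unfolding is_wderiv_iff
proof (intro conjI ballI)
  have indW: "(\<lambda>x. indicator {-L..L} x * W x) = W"
    using L2_onD(3)[OF W] by (auto simp: fun_eq_iff indicator_def)
  thus "L2_on {-L..L} (\<lambda>x. indicator {-L..L} x * W x)" using W by simp
  fix x assume x: "x \<in> {-L..L}"
  have "(\<lambda>k. LINT t|lborel. indicator {-L..x} t * (indicator {-L..L} t * v k t))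
      \<longlonglongrightarrow> (LINT t|lborel. indicator {-L..x} t * W t)"
    by (rule set_integral_tendsto_of_L2[OF is_wderiv_L2_on[OF w] W L D]) simp
  moreover have "indicator {-L..x} t * (indicator {-L..L} t * v k t) = indicator {-L..x} t * v k t" for k t
    using x by (auto simp: indicator_def)
  ultimately have "(\<lambda>k. u k x - u k (-L)) \<longlonglongrightarrow> (LINT t|lborel. indicator {-L..x} t * W t)"
    using is_wderiv_eq[OF w x] by simp
  moreover have "(\<lambda>k. u k x - u k (-L)) \<longlonglongrightarrow> g x - g (-L)"
    using x L by (intro tendsto_diff lim) auto
  ultimately show "g x = g (-L) + (LINT t|lborel. indicator {-L..x} t * W t)"
    using LIMSEQ_unique by fastforce
qed

lemma H1m_of_uniform_limit:
  assumes u: "\<And>k. H1m L (m k) (u k)" and m: "m \<longlonglongrightarrow> m0"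
    and lim: "uniform_limit {-L..L} u g sequentially" and wg: "is_wderiv L g W" and L: "-L \<le> L"
  shows "H1m L m0 g"
proof -
  have bd: "u k (-L) = - m k" "u k L = m k" for k
    using u[of k] unfolding H1m_def by auto
  have "(\<lambda>k. u k (-L)) \<longlonglongrightarrow> g (-L)" "(\<lambda>k. u k L) \<longlonglongrightarrow> g L"
    using tendsto_uniform_limitI[OF lim] L by auto
  hence "g (-L) = - m0" "g L = m0"
    unfolding bd using tendsto_minus[OF m] m LIMSEQ_unique by auto
  thus ?thesis using wg unfolding H1m_def H1_def by blast
qed

lemma H1_convergesI:
  fixes u v :: "nat \<Rightarrow> real \<Rightarrow> real"
  assumes w: "\<And>k. is_wderiv L (u k) (v k)" and wg: "is_wderiv L g W"
    and lim: "uniform_limit {-L..L} u g sequentially"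
    and D: "(\<lambda>k. LINT x|lborel. (indicator {-L..L} x * v k x - indicator {-L..L} x * W x)\<^sup>2) \<longlonglongrightarrow> 0"
  shows "H1_converges L u g"
  unfolding H1_converges_def
proof (intro conjI allI impI)
  show "(\<lambda>k. LINT x:{-L..L}|lborel. (u k x - g x)\<^sup>2) \<longlonglongrightarrow> 0"
    using set_integral_square_tendsto_of_uniform_limit[OF lim is_wderiv_continuous[OF w]
        is_wderiv_continuous[OF wg]] .
  fix W' w' assume W': "is_wderiv L g W'" and w': "\<forall>k. is_wderiv L (u k) (w' k)"
  have "(LINT x:{-L..L}|lborel. (w' k x - W' x)\<^sup>2)
      = (LINT x|lborel. (indicator {-L..L} x * v k x - indicator {-L..L} x * W x)\<^sup>2)" for k
  proof -
    have "(LINT x:{-L..L}|lborel. (w' k x - W' x)\<^sup>2)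
        = (LINT x|lborel. (indicator {-L..L} x * w' k x - indicator {-L..L} x * W' x)\<^sup>2)"
      unfolding set_lebesgue_integral_def
      by (intro Bochner_Integration.integral_cong) (auto simp: indicator_def)
    also have "\<dots> = (LINT x|lborel. (indicator {-L..L} x * v k x - indicator {-L..L} x * W x)\<^sup>2)"
    proof (rule integral_cong_AE)
      note meas = L2_onD(1)[OF is_wderiv_L2_on]
      show "(\<lambda>x. (indicator {-L..L} x * w' k x - indicator {-L..L} x * W' x)\<^sup>2) \<in> borel_measurable lborel"
        using meas[OF w'[rule_format]] meas[OF W'] by measurable
      show "(\<lambda>x. (indicator {-L..L} x * v k x - indicator {-L..L} x * W x)\<^sup>2) \<in> borel_measurable lborel"
        using meas[OF w] meas[OF wg] by measurable
      show "AE x in lborel. (indicator {-L..L} x * w' k x - indicator {-L..L} x * W' x)\<^sup>2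
          = (indicator {-L..L} x * v k x - indicator {-L..L} x * W x)\<^sup>2"
        using is_wderiv_unique_AE[OF w'[rule_format, of k] w] is_wderiv_unique_AE[OF W' wg]
        by eventually_elim (simp only:)
    qed
    finally show ?thesis .
  qed
  thus "(\<lambda>k. LINT x:{-L..L}|lborel. (w' k x - W' x)\<^sup>2) \<longlonglongrightarrow> 0" using D by simp
qed

section \<open>Dirichlet and potential energy\<close>

definition dirichlet :: "(real \<Rightarrow> real) \<Rightarrow> real \<Rightarrow> (real \<Rightarrow> real) \<Rightarrow> real" where
  "dirichlet a L v = (LINT x|lborel. a x * (indicator {-L..L} x * v x)\<^sup>2)"

definition potential :: "(real \<Rightarrow> real) \<Rightarrow> (real \<Rightarrow> real) \<Rightarrow> real \<Rightarrow> (real \<Rightarrow> real) \<Rightarrow> real" where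
  "potential b G L u = (LINT x|lborel. indicator {-L..L} x * (G (u x) * b x))"

lemma integrable_weighted_square:
  fixes a V :: "real \<Rightarrow> real"
  assumes "continuous_on UNIV a" and "L2_on {c..d} V"
  shows "integrable lborel (\<lambda>x. a x * (V x)\<^sup>2)"
  using L2_onD[OF assms(2)] by (intro integrable_continuous_mult[OF assms(1)]) auto

lemma integrable_potential:
  fixes b G u :: "real \<Rightarrow> real"
  assumes b: "continuous_on UNIV b" and G: "continuous_on UNIV G" and u: "continuous_on {-L..L} u"
  shows "integrable lborel (\<lambda>x. indicator {-L..L} x * (G (u x) * b x))"
proof -
  have "continuous_on {-L..L} (\<lambda>x. G (u x) * b x)"
    using continuous_on_compose2[OF G u] continuous_on_subset[OF b]
    by (intro continuous_on_mult) auto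
  hence "integrable lborel (\<lambda>x. indicator {-L..L} x *\<^sub>R (G (u x) * b x))"
    by (rule borel_integrable_compact[rotated]) simp
  thus ?thesis by simp
qed

lemma energy_eq:
  assumes a: "continuous_on UNIV a" and b: "continuous_on UNIV b" and G: "continuous_on UNIV G"
    and w: "is_wderiv L u v"
  shows "energy a b G L u v = dirichlet a L v / 2 + potential b G L u"
proof -
  have "energy a b G L u v = (LINT x|lborel. a x * (indicator {-L..L} x * v x)\<^sup>2 / 2
      + indicator {-L..L} x * (G (u x) * b x))"
    unfolding energy_def set_lebesgue_integral_def
    by (intro Bochner_Integration.integral_cong) (auto simp: indicator_def)
  also have "\<dots> = dirichlet a L v / 2 + potential b G L u"
    unfolding dirichlet_def potential_def
    using integrable_weighted_square[OF a is_wderiv_L2_on[OF w]]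
      integrable_potential[OF b G is_wderiv_continuous[OF w]] by simp
  finally show ?thesis .
qed

lemma dirichlet_nonneg: "(\<And>x. 0 \<le> a x) \<Longrightarrow> 0 \<le> dirichlet a L v"
  unfolding dirichlet_def by (intro integral_nonneg_AE) auto

lemma potential_nonneg: "(\<And>s. 0 \<le> G s) \<Longrightarrow> (\<And>x. 0 \<le> b x) \<Longrightarrow> 0 \<le> potential b G L u"
  unfolding potential_def by (intro integral_nonneg_AE) auto

lemma dirichlet_cong:
  assumes a: "continuous_on UNIV a" and w1: "is_wderiv L u v1" and w2: "is_wderiv L u v2"
  shows "dirichlet a L v1 = dirichlet a L v2"
  unfolding dirichlet_def
proof (rule integral_cong_AE)
  have [measurable]: "a \<in> borel_measurable lborel" using a by (auto intro: borel_measurable_continuous_onI)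
  show "(\<lambda>x. a x * (indicator {-L..L} x * v1 x)\<^sup>2) \<in> borel_measurable lborel"
    using L2_onD(1)[OF is_wderiv_L2_on[OF w1]] by measurable
  show "(\<lambda>x. a x * (indicator {-L..L} x * v2 x)\<^sup>2) \<in> borel_measurable lborel"
    using L2_onD(1)[OF is_wderiv_L2_on[OF w2]] by measurable
  show "AE x in lborel. a x * (indicator {-L..L} x * v1 x)\<^sup>2 = a x * (indicator {-L..L} x * v2 x)\<^sup>2"
    using is_wderiv_unique_AE[OF w1 w2] by eventually_elim (simp only:)
qed

lemma dirichlet_const: "dirichlet a L (\<lambda>x. c) = c\<^sup>2 * dirichlet a L (\<lambda>x. 1)"
proof -
  have "(\<lambda>x. a x * (indicator {-L..L} x * c)\<^sup>2) = (\<lambda>x. c\<^sup>2 * (a x * (indicator {-L..L} x * 1)\<^sup>2))"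
    by (simp add: fun_eq_iff power_mult_distrib)
  thus ?thesis unfolding dirichlet_def by simp
qed

lemma dirichlet_add_const:
  assumes a: "continuous_on UNIV a" and w: "is_wderiv L u v"
  shows "dirichlet a L (\<lambda>x. v x + c) = dirichlet a L v
    + 2 * c * (LINT x|lborel. a x * (indicator {-L..L} x * v x)) + c\<^sup>2 * dirichlet a L (\<lambda>x. 1)"
proof -
  let ?I = "indicator {-L..L} :: real \<Rightarrow> real"
  have i1: "integrable lborel (\<lambda>x. a x * (?I x * v x)\<^sup>2)"
    by (rule integrable_weighted_square[OF a is_wderiv_L2_on[OF w]])
  have i2: "integrable lborel (\<lambda>x. a x * (?I x * v x))"
    using L2_on_integrable[OF is_wderiv_L2_on[OF w]]
    by (rule integrable_continuous_mult[OF a, where c="-L" and d=L]) simp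
  have i3: "integrable lborel (\<lambda>x. a x * (?I x * 1)\<^sup>2)"
  proof (rule integrable_continuous_mult[OF a, where c="-L" and d=L])
    show "integrable lborel (\<lambda>x. (?I x * 1)\<^sup>2)"
      using integrable_indicator_Icc_mult[of "-L" L 1] by (simp only: indicator_square_eq) simp
  qed simp
  have "dirichlet a L (\<lambda>x. v x + c)
      = (LINT x|lborel. a x * (?I x * v x)\<^sup>2 + 2 * c * (a x * (?I x * v x)) + c\<^sup>2 * (a x * (?I x * 1)\<^sup>2))"
    unfolding dirichlet_def
    by (intro Bochner_Integration.integral_cong) (auto simp: indicator_def power2_eq_square algebra_simps)
  also have "\<dots> = dirichlet a L v + 2 * c * (LINT x|lborel. a x * (?I x * v x)) + c\<^sup>2 * dirichlet a L (\<lambda>x. 1)"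
    unfolding dirichlet_def using i1 i2 i3 by simp
  finally show ?thesis .
qed

lemma dirichlet_midpoint:
  assumes a: "continuous_on UNIV a" and w1: "is_wderiv L u1 v1" and w2: "is_wderiv L u2 v2"
  shows "dirichlet a L (\<lambda>x. 1/2 * v1 x + 1/2 * v2 x)
    = dirichlet a L v1 / 2 + dirichlet a L v2 / 2 - dirichlet a L (\<lambda>x. v1 x - v2 x) / 4"
proof -
  let ?V1 = "\<lambda>x. indicator {-L..L} x * v1 x" and ?V2 = "\<lambda>x. indicator {-L..L} x * v2 x"
  note L2 = is_wderiv_L2_on[OF w1] is_wderiv_L2_on[OF w2]
  have "dirichlet a L (\<lambda>x. 1/2 * v1 x + 1/2 * v2 x)
      = (LINT x|lborel. a x * (?V1 x)\<^sup>2 / 2 + a x * (?V2 x)\<^sup>2 / 2 - a x * (?V1 x - ?V2 x)\<^sup>2 / 4)"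
    unfolding dirichlet_def
    by (intro Bochner_Integration.integral_cong) (simp_all add: power2_eq_square field_simps)
  also have "\<dots> = dirichlet a L v1 / 2 + dirichlet a L v2 / 2 - dirichlet a L (\<lambda>x. v1 x - v2 x) / 4"
    unfolding dirichlet_def
    using integrable_weighted_square[OF a L2(1)] integrable_weighted_square[OF a L2(2)]
      integrable_weighted_square[OF a L2_on_diff[OF L2]]
    by (simp add: right_diff_distrib)
  finally show ?thesis .
qed

lemma potential_le:
  assumes b: "continuous_on UNIV b" and G: "continuous_on UNIV G" and u: "continuous_on {-L..L} u"
    and P: "\<And>x. x \<in> {-L..L} \<Longrightarrow> G (u x) * b x \<le> P" and L: "-L \<le> L"
  shows "potential b G L u \<le> P * (2 * L)"
proof -
  have "potential b G L u \<le> (LINT x|lborel. indicator {-L..L} x * P)"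
    unfolding potential_def using P
    by (intro integral_mono integrable_potential[OF b G u] integrable_indicator_Icc_mult)
      (auto simp: indicator_def)
  thus ?thesis using L by (simp add: mult_ac)
qed

lemma potential_diff_le:
  fixes b G h g :: "real \<Rightarrow> real"
  assumes b: "continuous_on UNIV b" and G: "continuous_on UNIV G"
    and h: "continuous_on {-L..L} h" and g: "continuous_on {-L..L} g"
    and pointwise: "\<And>x. x \<in> {-L..L} \<Longrightarrow> \<bar>G (h x) * b x - G (g x) * b x\<bar> \<le> \<epsilon>" and "0 \<le> \<epsilon>"
  shows "\<bar>potential b G L h - potential b G L g\<bar> \<le> \<epsilon> * (2 * \<bar>L\<bar>)"
proof -
  have "\<bar>potential b G L h - potential b G L g\<bar>
      = \<bar>LINT x|lborel. indicator {-L..L} x * (G (h x) * b x - G (g x) * b x)\<bar>"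
    unfolding potential_def using integrable_potential[OF b G h] integrable_potential[OF b G g]
    by (simp add: right_diff_distrib)
  also have "\<dots> \<le> (LINT x|lborel. indicator {-L..L} x * \<epsilon>)"
    using integrable_potential[OF b G h] integrable_potential[OF b G g] pointwise
    by (intro integral_abs_bound_integral integrable_indicator_Icc_mult)
      (auto simp: indicator_def right_diff_distrib)
  also have "\<dots> \<le> \<epsilon> * (2 * \<bar>L\<bar>)"
  proof (cases "-L \<le> L")
    case False
    moreover have "0 \<le> \<epsilon> * (2 * \<bar>L\<bar>)" using \<open>0 \<le> \<epsilon>\<close> by simp
    ultimately show ?thesis by simp
  qed simp
  finally show ?thesis .
qed

lemma potential_uniformly_continuous:
  fixes b G g :: "real \<Rightarrow> real"
  assumes b: "continuous_on UNIV b" and G: "continuous_on UNIV G"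
    and g: "continuous_on {-L..L} g" and e: "0 < e"
  obtains \<delta> where "\<delta> > 0" "\<And>h. continuous_on {-L..L} h \<Longrightarrow> (\<forall>x\<in>{-L..L}. \<bar>h x - g x\<bar> < \<delta>) \<Longrightarrow>
      \<bar>potential b G L h - potential b G L g\<bar> < e"
proof -
  obtain R where R: "\<And>x. x \<in> {-L..L} \<Longrightarrow> norm (g x) \<le> R"
    using continuous_on_compact_bound[OF compact_Icc g] by blast
  have "compact {-L..L}" "continuous_on {-L..L} b" using continuous_on_subset[OF b] by auto
  then obtain B where "0 \<le> B" and B: "\<And>x. x \<in> {-L..L} \<Longrightarrow> norm (b x) \<le> B"
    by (rule continuous_on_compact_bound) blast
  define C where "C = B * (2 * \<bar>L\<bar>) + 1"
  have C: "0 < C" using \<open>0 \<le> B\<close> by (simp add: C_def add_nonneg_pos)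
  define \<epsilon> where "\<epsilon> = e / (2 * C)"
  have \<epsilon>: "0 < \<epsilon>" using e C by (simp add: \<epsilon>_def)
  have "uniformly_continuous_on {-R-1..R+1} G"
    by (rule compact_uniformly_continuous) (use G in \<open>auto intro: continuous_on_subset\<close>)
  then obtain d where d: "d > 0" and
    dG: "\<And>s s'. s \<in> {-R-1..R+1} \<Longrightarrow> s' \<in> {-R-1..R+1} \<Longrightarrow> dist s' s < d \<Longrightarrow> dist (G s') (G s) < \<epsilon>"
    using \<epsilon> unfolding uniformly_continuous_on_def by metis
  show ?thesis
  proof (rule that[of "min d 1"])
    show "0 < min d 1" using d by simp
    fix h assume h: "continuous_on {-L..L} h" and close: "\<forall>x\<in>{-L..L}. \<bar>h x - g x\<bar> < min d 1"
    have pointwise: "\<bar>G (h x) * b x - G (g x) * b x\<bar> \<le> \<epsilon> * B" if x: "x \<in> {-L..L}" for x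
    proof -
      have "\<bar>h x - g x\<bar> < d" "\<bar>h x - g x\<bar> < 1" "\<bar>g x\<bar> \<le> R" using R[OF x] close x by auto
      hence "g x \<in> {-R-1..R+1}" "h x \<in> {-R-1..R+1}" "dist (h x) (g x) < d"
        by (auto simp: dist_real_def abs_le_iff abs_less_iff)
      hence "\<bar>G (h x) - G (g x)\<bar> \<le> \<epsilon>" using dG[of "g x" "h x"] by (simp add: dist_real_def)
      thus ?thesis using B[OF x] \<open>0 \<le> B\<close> \<epsilon>
        by (simp add: left_diff_distrib[symmetric] abs_mult mult_mono)
    qed
    have "\<bar>potential b G L h - potential b G L g\<bar> \<le> \<epsilon> * B * (2 * \<bar>L\<bar>)"
      using \<epsilon> \<open>0 \<le> B\<close> by (intro potential_diff_le[OF b G h g pointwise]) auto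
    also have "\<dots> < \<epsilon> * C"
      unfolding C_def using \<epsilon> by (simp add: algebra_simps)
    also have "\<dots> < e" using C e by (simp add: \<epsilon>_def)
    finally show "\<bar>potential b G L h - potential b G L g\<bar> < e" .
  qed
qed

lemma potential_tendsto:
  fixes b G g :: "real \<Rightarrow> real" and h :: "nat \<Rightarrow> real \<Rightarrow> real"
  assumes b: "continuous_on UNIV b" and G: "continuous_on UNIV G"
    and g: "continuous_on {-L..L} g" and h: "\<And>k. continuous_on {-L..L} (h k)"
    and lim: "uniform_limit {-L..L} h g sequentially"
  shows "(\<lambda>k. potential b G L (h k)) \<longlonglongrightarrow> potential b G L g"
proof (rule LIMSEQ_I)
  fix e :: real assume e: "0 < e"
  obtain \<delta> where "\<delta> > 0" and \<delta>: "\<And>h'. continuous_on {-L..L} h' \<Longrightarrow> (\<forall>x\<in>{-L..L}. \<bar>h' x - g x\<bar> < \<delta>) \<Longrightarrow>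
      \<bar>potential b G L h' - potential b G L g\<bar> < e"
    using potential_uniformly_continuous[OF b G g e] by blast
  then obtain N where N: "\<forall>n\<ge>N. \<forall>x\<in>{-L..L}. dist (h n x) (g x) < \<delta>"
    using lim unfolding uniform_limit_sequentially_iff by blast
  show "\<exists>N. \<forall>n\<ge>N. norm (potential b G L (h n) - potential b G L g) < e"
  proof (intro exI allI impI)
    fix n assume "N \<le> n"
    thus "norm (potential b G L (h n) - potential b G L g) < e"
      using \<delta>[OF h, of n] N by (simp add: dist_real_def)
  qed
qed

lemma uniform_limit_add_linear:
  fixes d :: "nat \<Rightarrow> real" and w :: "real \<Rightarrow> real"
  assumes "d \<longlonglongrightarrow> 0" and L_pos: "0 < L"
  shows "uniform_limit {-L..L} (\<lambda>k x. w x + d k * x) w sequentially"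
  unfolding uniform_limit_sequentially_iff dist_real_def
proof (intro allI impI)
  fix e :: real assume "0 < e"
  then obtain N where N: "\<And>n. n \<ge> N \<Longrightarrow> \<bar>d n\<bar> < e / L"
    using assms L_pos unfolding LIMSEQ_def dist_real_def by (metis divide_pos_pos diff_zero)
  have "\<bar>w x + d n * x - w x\<bar> < e" if "n \<ge> N" "x \<in> {-L..L}" for n x
  proof -
    have "\<bar>d n * x\<bar> \<le> \<bar>d n\<bar> * L" using that(2) by (auto simp: abs_mult intro!: mult_left_mono)
    also have "\<dots> < e" using N[OF that(1)] L_pos by (simp add: field_simps)
    finally show ?thesis by simp
  qed
  thus "\<exists>N. \<forall>n\<ge>N. \<forall>x\<in>{-L..L}. \<bar>w x + d n * x - w x\<bar> < e" by blast
qed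

lemma midpoint_linear_close:
  fixes u1 u2 g :: "real \<Rightarrow> real"
  assumes u1: "\<And>x. x \<in> {-L..L} \<Longrightarrow> \<bar>u1 x - g x\<bar> < \<delta> / 2"
    and u2: "\<And>x. x \<in> {-L..L} \<Longrightarrow> \<bar>u2 x - g x\<bar> < \<delta> / 2"
    and d: "\<bar>d\<bar> * \<bar>L\<bar> < \<delta> / 2" and x: "x \<in> {-L..L}"
  shows "\<bar>1/2 * u1 x + 1/2 * u2 x + d * x - g x\<bar> < \<delta>"
proof -
  have "\<bar>d * x\<bar> \<le> \<bar>d\<bar> * \<bar>L\<bar>" using x by (auto simp: abs_mult intro!: mult_left_mono)
  moreover have "\<bar>(u1 x - g x) / 2 + (u2 x - g x) / 2 + d * x\<bar>
      \<le> \<bar>u1 x - g x\<bar> / 2 + \<bar>u2 x - g x\<bar> / 2 + \<bar>d * x\<bar>"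
    using abs_triangle_ineq[of "(u1 x - g x) / 2 + (u2 x - g x) / 2" "d * x"]
      abs_triangle_ineq[of "(u1 x - g x) / 2" "(u2 x - g x) / 2"] by simp
  moreover have "1/2 * u1 x + 1/2 * u2 x + d * x - g x = (u1 x - g x) / 2 + (u2 x - g x) / 2 + d * x"
    by (simp add: field_simps)
  ultimately show ?thesis using u1[OF x] u2[OF x] d by linarith
qed

section \<open>Minimizers\<close>

locale energy_setting =
  fixes a b G :: "real \<Rightarrow> real" and L :: real
  assumes a_cont: "continuous_on UNIV a" and b_cont: "continuous_on UNIV b"
    and G_cont: "continuous_on UNIV G"
    and a_pos: "\<And>x. 0 < a x" and b_pos: "\<And>x. 0 < b x" and G_nonneg: "\<And>s. 0 \<le> G s"
    and L_pos: "0 < L"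
begin

lemma minimizer_le:
  assumes "minimizer a b G L m u" "is_wderiv L u v" "H1m L m w" "is_wderiv L w v'"
  shows "dirichlet a L v / 2 + potential b G L u \<le> dirichlet a L v' / 2 + potential b G L w"
proof -
  have "energy a b G L u v \<le> energy a b G L w v'"
    using assms unfolding minimizer_def by blast
  thus ?thesis
    using energy_eq[OF a_cont b_cont G_cont assms(2)] energy_eq[OF a_cont b_cont G_cont assms(4)] by simp
qed

lemma dirichlet_coercive:
  obtains c where "0 < c"
    "\<And>u v. is_wderiv L u v \<Longrightarrow> c * (LINT x|lborel. (indicator {-L..L} x * v x)\<^sup>2) \<le> dirichlet a L v"
proof -
  have "\<exists>x\<in>{-L..L}. \<forall>y\<in>{-L..L}. a x \<le> a y"
    by (rule continuous_attains_inf) (use L_pos continuous_on_subset[OF a_cont] in auto)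
  then obtain x0 where x0: "\<And>y. y \<in> {-L..L} \<Longrightarrow> a x0 \<le> a y" by blast
  show ?thesis
  proof (rule that[OF a_pos[of x0]])
    fix u v assume w: "is_wderiv L u v"
    show "a x0 * (LINT x|lborel. (indicator {-L..L} x * v x)\<^sup>2) \<le> dirichlet a L v"
      unfolding dirichlet_def by (rule integral_weighted_square_ge[OF a_cont x0 is_wderiv_L2_on[OF w]])
  qed
qed

lemma minimizer_le_linear:
  assumes min: "minimizer a b G L m u" and w: "is_wderiv L u v"
  shows "dirichlet a L v / 2 + potential b G L u
    \<le> dirichlet a L (\<lambda>x. m / L) / 2 + potential b G L (\<lambda>x. m / L * x)"
proof (rule minimizer_le[OF min w _ is_wderiv_linear])
  show "H1m L m (\<lambda>x. m / L * x)"
    unfolding H1m_def H1_def using L_pos by (intro conjI exI[of _ "\<lambda>x. m / L"] is_wderiv_linear) auto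
qed

lemma minimizer_derivative_bounded:
  obtains K where "\<And>m u v. \<bar>m\<bar> \<le> B \<Longrightarrow> minimizer a b G L m u \<Longrightarrow> is_wderiv L u v \<Longrightarrow>
    (LINT x|lborel. (indicator {-L..L} x * v x)\<^sup>2) \<le> K"
proof -
  obtain c where "0 < c" and c: "\<And>u v. is_wderiv L u v \<Longrightarrow>
      c * (LINT x|lborel. (indicator {-L..L} x * v x)\<^sup>2) \<le> dirichlet a L v"
    by (rule dirichlet_coercive) blast
  obtain Gm where Gm: "\<And>s. s \<in> {-\<bar>B\<bar>..\<bar>B\<bar>} \<Longrightarrow> norm (G s) \<le> Gm"
    using continuous_on_compact_bound[OF compact_Icc continuous_on_subset[OF G_cont]] by blast
  obtain Bb where Bb: "\<And>x. x \<in> {-L..L} \<Longrightarrow> norm (b x) \<le> Bb"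
    using continuous_on_compact_bound[OF compact_Icc continuous_on_subset[OF b_cont]] by blast
  define D1 where "D1 = dirichlet a L (\<lambda>x. 1)"
  have "0 \<le> D1" unfolding D1_def using a_pos by (intro dirichlet_nonneg less_imp_le)
  define C where "C = (B / L)\<^sup>2 * D1 / 2 + Gm * Bb * (2 * L)"
  show ?thesis
  proof (rule that[of "2 * C / c"])
    fix m u v assume m: "\<bar>m\<bar> \<le> B" and min: "minimizer a b G L m u" and w: "is_wderiv L u v"
    note le = minimizer_le_linear[OF min w]
    have D: "dirichlet a L (\<lambda>x. m / L) \<le> (B / L)\<^sup>2 * D1"
      unfolding dirichlet_const[of a L "m / L"] D1_def[symmetric]
      using m L_pos \<open>0 \<le> D1\<close> power_mono[of "\<bar>m\<bar>" B 2]
      by (intro mult_right_mono) (auto simp: power_divide divide_right_mono)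
    have P: "potential b G L (\<lambda>x. m / L * x) \<le> Gm * Bb * (2 * L)"
    proof (rule potential_le[OF b_cont G_cont])
      fix x assume x: "x \<in> {-L..L}"
      have "\<bar>m / L * x\<bar> \<le> \<bar>B\<bar>"
        using x L_pos m by (auto simp: abs_mult field_simps intro!: mult_mono)
      hence "m / L * x \<in> {-\<bar>B\<bar>..\<bar>B\<bar>}" by (simp only: abs_le_iff atLeastAtMost_iff) (simp add: minus_le_iff)
      hence "G (m / L * x) \<le> Gm" using Gm[of "m / L * x"] by simp
      thus "G (m / L * x) * b x \<le> Gm * Bb"
        using Bb[OF x] G_nonneg[of "m / L * x"] b_pos[of x] by (intro mult_mono) auto
    qed (use L_pos in \<open>auto intro!: continuous_intros\<close>)
    have "0 \<le> potential b G L u"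
      by (rule potential_nonneg) (use G_nonneg b_pos less_imp_le in auto)
    hence "dirichlet a L v / 2 \<le> C" using le D P unfolding C_def by linarith
    hence "dirichlet a L v \<le> 2 * C" by simp
    thus "(LINT x|lborel. (indicator {-L..L} x * v x)\<^sup>2) \<le> 2 * C / c"
      using c[OF w] \<open>0 < c\<close> by (simp add: field_simps)
  qed
qed

text \<open>Each \<open>u\<^sub>i\<close> is tested against the midpoint of \<open>u\<^sub>1\<close> and \<open>u\<^sub>2\<close>, shifted by a linear
  function so as to take the boundary values of \<open>u\<^sub>i\<close>. Adding the two inequalities, the
  parallelogram law (\<open>dirichlet_midpoint\<close>) leaves a quarter of the Dirichlet
  energy of the difference.\<close>

lemma minimizers_dirichlet_diff_le:
  assumes min1: "minimizer a b G L m1 u1" and min2: "minimizer a b G L m2 u2"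
    and w1: "is_wderiv L u1 v1" and w2: "is_wderiv L u2 v2"
  defines "c \<equiv> (m1 - m2) / (2 * L)"
  shows "dirichlet a L (\<lambda>x. v1 x - v2 x) / 4 \<le> c\<^sup>2 * dirichlet a L (\<lambda>x. 1)
    + potential b G L (\<lambda>x. 1/2 * u1 x + 1/2 * u2 x + c * x)
    + potential b G L (\<lambda>x. 1/2 * u1 x + 1/2 * u2 x + - c * x)
    - potential b G L u1 - potential b G L u2"
proof -
  have mid: "is_wderiv L (\<lambda>x. 1/2 * u1 x + 1/2 * u2 x) (\<lambda>x. 1/2 * v1 x + 1/2 * v2 x)"
    by (rule is_wderiv_lincomb[OF w1 w2])
  have bd: "u1 (-L) = -m1" "u1 L = m1" "u2 (-L) = -m2" "u2 L = m2"
    using min1 min2 unfolding minimizer_def H1m_def by auto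
  have "H1m L m1 (\<lambda>x. 1/2 * u1 x + 1/2 * u2 x + c * x)"
    using bd L_pos is_wderiv_add_linear[OF mid, of "c"] unfolding H1m_def H1_def
    by (auto simp: c_def field_simps)
  hence le1: "dirichlet a L v1 / 2 + potential b G L u1 \<le> dirichlet a L (\<lambda>x. 1/2 * v1 x + 1/2 * v2 x + c) / 2
      + potential b G L (\<lambda>x. 1/2 * u1 x + 1/2 * u2 x + c * x)"
    by (rule minimizer_le[OF min1 w1 _ is_wderiv_add_linear[OF mid]])
  have "H1m L m2 (\<lambda>x. 1/2 * u1 x + 1/2 * u2 x + - c * x)"
    using bd L_pos is_wderiv_add_linear[OF mid, of "- c"] unfolding H1m_def H1_def
    by (auto simp: c_def field_simps)
  hence le2: "dirichlet a L v2 / 2 + potential b G L u2 \<le> dirichlet a L (\<lambda>x. 1/2 * v1 x + 1/2 * v2 x + - c) / 2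
      + potential b G L (\<lambda>x. 1/2 * u1 x + 1/2 * u2 x + - c * x)"
    by (rule minimizer_le[OF min2 w2 _ is_wderiv_add_linear[OF mid]])
  have "dirichlet a L (\<lambda>x. 1/2 * v1 x + 1/2 * v2 x + c) + dirichlet a L (\<lambda>x. 1/2 * v1 x + 1/2 * v2 x + - c)
      = dirichlet a L v1 + dirichlet a L v2 - dirichlet a L (\<lambda>x. v1 x - v2 x) / 2 + 2 * c\<^sup>2 * dirichlet a L (\<lambda>x. 1)"
    using dirichlet_add_const[OF a_cont mid, of c] dirichlet_add_const[OF a_cont mid, of "-c"]
      dirichlet_midpoint[OF a_cont w1 w2] by simp
  thus ?thesis using le1 le2 by simp
qed

lemma minimizers_dirichlet_diff_lt:
  assumes min1: "minimizer a b G L m1 u1" and min2: "minimizer a b G L m2 u2"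
    and w1: "is_wderiv L u1 v1" and w2: "is_wderiv L u2 v2"
    and \<delta>: "\<And>h. continuous_on {-L..L} h \<Longrightarrow> (\<forall>x\<in>{-L..L}. \<bar>h x - g x\<bar> < \<delta>) \<Longrightarrow>
      \<bar>potential b G L h - potential b G L g\<bar> < \<eta>"
    and u1: "\<And>x. x \<in> {-L..L} \<Longrightarrow> \<bar>u1 x - g x\<bar> < \<delta> / 2"
    and u2: "\<And>x. x \<in> {-L..L} \<Longrightarrow> \<bar>u2 x - g x\<bar> < \<delta> / 2"
    and m12: "\<bar>m1 - m2\<bar> < \<delta>"
  shows "dirichlet a L (\<lambda>x. v1 x - v2 x) < ((m1 - m2) / L)\<^sup>2 * dirichlet a L (\<lambda>x. 1) + 16 * \<eta>"
proof -
  define d where "d = (m1 - m2) / (2 * L)"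
  have mid: "is_wderiv L (\<lambda>x. 1/2 * u1 x + 1/2 * u2 x) (\<lambda>x. 1/2 * v1 x + 1/2 * v2 x)"
    by (rule is_wderiv_lincomb[OF w1 w2])
  have "\<bar>d\<bar> * \<bar>L\<bar> < \<delta> / 2" using m12 L_pos by (simp add: d_def abs_divide)
  hence close: "\<bar>potential b G L (\<lambda>x. 1/2 * u1 x + 1/2 * u2 x + d' * x) - potential b G L g\<bar> < \<eta>"
    if "\<bar>d'\<bar> = \<bar>d\<bar>" for d'
  proof (intro \<delta>[OF is_wderiv_continuous[OF is_wderiv_add_linear[OF mid]]] ballI)
    fix x assume x: "x \<in> {-L..L}"
    show "\<bar>1/2 * u1 x + 1/2 * u2 x + d' * x - g x\<bar> < \<delta>"
      using midpoint_linear_close[OF u1 u2 _ x, where d=d'] \<open>\<bar>d\<bar> * \<bar>L\<bar> < \<delta> / 2\<close> that by simp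
  qed
  have close_u: "\<bar>potential b G L u - potential b G L g\<bar> < \<eta>"
    if w: "is_wderiv L u v" and u: "\<And>x. x \<in> {-L..L} \<Longrightarrow> \<bar>u x - g x\<bar> < \<delta> / 2" for u v
  proof (intro \<delta>[OF is_wderiv_continuous[OF w]] ballI)
    fix x assume "x \<in> {-L..L}"
    thus "\<bar>u x - g x\<bar> < \<delta>" using u[of x] by linarith
  qed
  have "dirichlet a L (\<lambda>x. v1 x - v2 x) / 4 \<le> d\<^sup>2 * dirichlet a L (\<lambda>x. 1)
      + potential b G L (\<lambda>x. 1/2 * u1 x + 1/2 * u2 x + d * x)
      + potential b G L (\<lambda>x. 1/2 * u1 x + 1/2 * u2 x + - d * x)
      - potential b G L u1 - potential b G L u2"
    unfolding d_def by (rule minimizers_dirichlet_diff_le[OF min1 min2 w1 w2])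
  moreover have "4 * (d\<^sup>2 * dirichlet a L (\<lambda>x. 1)) = ((m1 - m2) / L)\<^sup>2 * dirichlet a L (\<lambda>x. 1)"
    by (simp add: d_def power_divide)
  ultimately show ?thesis
    using close[OF refl] close[of "-d"] close_u[OF w1 u1] close_u[OF w2 u2]
    unfolding abs_less_iff by linarith
qed

lemma minimizers_derivative_Cauchy:
  fixes m :: "nat \<Rightarrow> real" and u v :: "nat \<Rightarrow> real \<Rightarrow> real"
  assumes min: "\<And>k. minimizer a b G L (m k) (u k)" and w: "\<And>k. is_wderiv L (u k) (v k)"
    and m: "Cauchy m" and lim: "uniform_limit {-L..L} u g sequentially"
    and g: "continuous_on {-L..L} g" and e: "0 < e"
  shows "\<exists>N. \<forall>i\<ge>N. \<forall>j\<ge>N.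
    (LINT x|lborel. (indicator {-L..L} x * v i x - indicator {-L..L} x * v j x)\<^sup>2) < e"
proof -
  obtain c where "0 < c" and c: "\<And>u v. is_wderiv L u v \<Longrightarrow>
      c * (LINT x|lborel. (indicator {-L..L} x * v x)\<^sup>2) \<le> dirichlet a L v"
    by (rule dirichlet_coercive) blast
  define D1 where "D1 = dirichlet a L (\<lambda>x. 1)"
  have "0 \<le> D1" unfolding D1_def using a_pos by (intro dirichlet_nonneg less_imp_le)
  \<comment> \<open>Both terms of the bound in \<open>minimizers_dirichlet_diff_lt\<close> are made smaller than \<open>c e / 2\<close>.\<close>
  have ce: "0 < c * e" using \<open>0 < c\<close> e by simp
  obtain \<delta> where "0 < \<delta>" and \<delta>: "\<And>h. continuous_on {-L..L} h \<Longrightarrow> (\<forall>x\<in>{-L..L}. \<bar>h x - g x\<bar> < \<delta>) \<Longrightarrow>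
      \<bar>potential b G L h - potential b G L g\<bar> < c * e / 32"
    using potential_uniformly_continuous[OF b_cont G_cont g, of "c * e / 32"] ce by auto
  obtain N1 where N1: "\<And>n x. n \<ge> N1 \<Longrightarrow> x \<in> {-L..L} \<Longrightarrow> \<bar>u n x - g x\<bar> < \<delta> / 2"
    using lim \<open>0 < \<delta>\<close> unfolding uniform_limit_sequentially_iff dist_real_def by (metis half_gt_zero)
  define s where "s = min \<delta> (sqrt (c * e / 2 * L\<^sup>2 / (D1 + 1)))"
  have "0 < s" using \<open>0 < \<delta>\<close> ce \<open>0 \<le> D1\<close> L_pos by (simp add: s_def add_nonneg_pos)
  obtain N2 where N2: "\<And>i j. i \<ge> N2 \<Longrightarrow> j \<ge> N2 \<Longrightarrow> \<bar>m i - m j\<bar> < s"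
    using m \<open>0 < s\<close> unfolding Cauchy_def dist_real_def by blast
  show ?thesis
  proof (intro exI allI impI)
    fix i j assume i: "max N1 N2 \<le> i" and j: "max N1 N2 \<le> j"
    have "\<bar>m i - m j\<bar> < \<delta>" and "\<bar>m i - m j\<bar> < sqrt (c * e / 2 * L\<^sup>2 / (D1 + 1))"
      using N2[of i j] i j by (auto simp: s_def)
    from this(2) have "\<bar>m i - m j\<bar>\<^sup>2 < (sqrt (c * e / 2 * L\<^sup>2 / (D1 + 1)))\<^sup>2"
      by (rule power_strict_mono) auto
    moreover have "0 \<le> c * e / 2 * L\<^sup>2 / (D1 + 1)" using ce \<open>0 \<le> D1\<close> by simp
    ultimately have "(m i - m j)\<^sup>2 < c * e / 2 * L\<^sup>2 / (D1 + 1)" by simp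
    hence "(m i - m j)\<^sup>2 * (D1 + 1) < c * e / 2 * L\<^sup>2"
      by (simp only: pos_less_divide_eq[OF add_nonneg_pos[OF \<open>0 \<le> D1\<close> zero_less_one]])
    moreover have "((m i - m j) / L)\<^sup>2 * D1 * L\<^sup>2 \<le> (m i - m j)\<^sup>2 * (D1 + 1)"
      using L_pos by (simp add: power_divide mult_left_mono)
    ultimately have "((m i - m j) / L)\<^sup>2 * D1 * L\<^sup>2 < c * e / 2 * L\<^sup>2" by linarith
    hence "((m i - m j) / L)\<^sup>2 * D1 \<le> c * e / 2" using L_pos by simp
    moreover have "dirichlet a L (\<lambda>x. v i x - v j x) < ((m i - m j) / L)\<^sup>2 * D1 + 16 * (c * e / 32)"
      unfolding D1_def using N1 i j
      by (intro minimizers_dirichlet_diff_lt[OF min min w w \<delta> _ _ \<open>\<bar>m i - m j\<bar> < \<delta>\<close>]) auto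
    moreover have "c * (LINT x|lborel. (indicator {-L..L} x * v i x - indicator {-L..L} x * v j x)\<^sup>2)
        \<le> dirichlet a L (\<lambda>x. v i x - v j x)"
      using c[OF is_wderiv_lincomb[OF w[of i] w[of j], of 1 "-1"]] by (simp add: right_diff_distrib)
    ultimately have "c * (LINT x|lborel. (indicator {-L..L} x * v i x - indicator {-L..L} x * v j x)\<^sup>2) < c * e"
      by linarith
    thus "(LINT x|lborel. (indicator {-L..L} x * v i x - indicator {-L..L} x * v j x)\<^sup>2) < e"
      using \<open>0 < c\<close> by simp
  qed
qed

lemma dirichlet_potential_tendsto:
  fixes h w :: "nat \<Rightarrow> real \<Rightarrow> real"
  assumes w: "\<And>k. is_wderiv L (h k) (w k)" and wg: "is_wderiv L g W"
    and lim: "uniform_limit {-L..L} h g sequentially"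
    and D: "(\<lambda>k. LINT x|lborel. (indicator {-L..L} x * w k x - indicator {-L..L} x * W x)\<^sup>2) \<longlonglongrightarrow> 0"
  shows "(\<lambda>k. dirichlet a L (w k) / 2 + potential b G L (h k)) \<longlonglongrightarrow> dirichlet a L W / 2 + potential b G L g"
proof (intro tendsto_add tendsto_divide tendsto_const)
  show "(\<lambda>k. dirichlet a L (w k)) \<longlonglongrightarrow> dirichlet a L W"
    unfolding dirichlet_def
    by (rule weighted_integral_square_tendsto[OF a_cont is_wderiv_L2_on[OF w] is_wderiv_L2_on[OF wg] D])
  show "(\<lambda>k. potential b G L (h k)) \<longlonglongrightarrow> potential b G L g"
    by (rule potential_tendsto[OF b_cont G_cont is_wderiv_continuous[OF wg] is_wderiv_continuous[OF w] lim])
qed simp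

lemma minimizer_limit:
  fixes m :: "nat \<Rightarrow> real" and u v :: "nat \<Rightarrow> real \<Rightarrow> real"
  assumes min: "\<And>k. minimizer a b G L (m k) (u k)" and w: "\<And>k. is_wderiv L (u k) (v k)"
    and m: "m \<longlonglongrightarrow> m0" and lim: "uniform_limit {-L..L} u g sequentially"
    and wg: "is_wderiv L g W"
    and D: "(\<lambda>k. LINT x|lborel. (indicator {-L..L} x * v k x - indicator {-L..L} x * W x)\<^sup>2) \<longlonglongrightarrow> 0"
  shows "minimizer a b G L m0 g"
proof -
  have H: "H1m L m0 g"
    using min L_pos unfolding minimizer_def by (intro H1m_of_uniform_limit[OF _ m lim wg]) auto
  show ?thesis
    unfolding minimizer_def
  proof (intro conjI allI impI H)
    fix w' v1 v' assume hw: "H1m L m0 w'" and v1: "is_wderiv L g v1" and v': "is_wderiv L w' v'"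
    define d where "d k = (m k - m0) / L" for k
    have "(\<lambda>k. (m k - m0) / L) \<longlonglongrightarrow> (m0 - m0) / L" using L_pos by (intro tendsto_intros m) auto
    hence d0: "d \<longlonglongrightarrow> 0" unfolding d_def by simp
    have "H1m L (m k) (\<lambda>x. w' x + d k * x)" for k
      using H1m_add_linear[OF hw L_pos, of "m k - m0"] by (simp add: d_def)
    hence le: "dirichlet a L (v k) / 2 + potential b G L (u k)
        \<le> dirichlet a L (\<lambda>x. v' x + d k) / 2 + potential b G L (\<lambda>x. w' x + d k * x)" for k
      by (rule minimizer_le[OF min w _ is_wderiv_add_linear[OF v']])
    have "(LINT x|lborel. (indicator {-L..L} x * (v' x + d k) - indicator {-L..L} x * v' x)\<^sup>2)
        = (d k)\<^sup>2 * (2 * L)" for k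
    proof -
      have "(\<lambda>x. (indicator {-L..L} x * (v' x + d k) - indicator {-L..L} x * v' x)\<^sup>2)
          = (\<lambda>x. indicator {-L..L} x * (d k)\<^sup>2)"
        by (auto simp: fun_eq_iff indicator_def)
      thus ?thesis using L_pos by simp
    qed
    moreover have "(\<lambda>k. (d k)\<^sup>2 * (2 * L)) \<longlonglongrightarrow> 0\<^sup>2 * (2 * L)" by (intro tendsto_intros d0)
    ultimately have "(\<lambda>k. dirichlet a L (\<lambda>x. v' x + d k) / 2 + potential b G L (\<lambda>x. w' x + d k * x))
        \<longlonglongrightarrow> dirichlet a L v' / 2 + potential b G L w'"
      by (intro dirichlet_potential_tendsto is_wderiv_add_linear[OF v'] v' uniform_limit_add_linear[OF d0 L_pos])
        simp
    with dirichlet_potential_tendsto[OF w wg lim D] le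
    have "dirichlet a L W / 2 + potential b G L g \<le> dirichlet a L v' / 2 + potential b G L w'"
      by (intro LIMSEQ_le) auto
    thus "energy a b G L g v1 \<le> energy a b G L w' v'"
      using energy_eq[OF a_cont b_cont G_cont v1] energy_eq[OF a_cont b_cont G_cont v']
        dirichlet_cong[OF a_cont v1 wg] by simp
  qed
qed

lemma minimizers_subseq_limits:
  fixes m :: "nat \<Rightarrow> real" and u v :: "nat \<Rightarrow> real \<Rightarrow> real"
  assumes min: "\<And>k. minimizer a b G L (m k) (u k)" and w: "\<And>k. is_wderiv L (u k) (v k)"
    and m: "m \<longlonglongrightarrow> m0"
  obtains r g W where "strict_mono r" "uniform_limit {-L..L} (\<lambda>k. u (r k)) g sequentially"
    "L2_on {-L..L} W" "(\<lambda>k. LINT x|lborel. (indicator {-L..L} x * v (r k) x - W x)\<^sup>2) \<longlonglongrightarrow> 0"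
proof -
  obtain B where B: "\<And>k. \<bar>m k\<bar> \<le> B"
    using convergent_imp_Bseq[OF convergentI[OF m]] unfolding Bseq_def by auto
  obtain K where K: "\<And>m u v. \<bar>m\<bar> \<le> B \<Longrightarrow> minimizer a b G L m u \<Longrightarrow> is_wderiv L u v \<Longrightarrow>
      (LINT x|lborel. (indicator {-L..L} x * v x)\<^sup>2) \<le> K"
    by (rule minimizer_derivative_bounded) blast
  have "\<bar>u k (-L)\<bar> \<le> B" for k
    using min[of k] B[of k] unfolding minimizer_def H1m_def by simp
  then obtain g r1 where g: "continuous_on {-L..L} g" and r1: "strict_mono r1"
    and lim1: "uniform_limit {-L..L} (\<lambda>k. u (r1 k)) g sequentially"
    by (rule is_wderiv_uniform_subseq[where u=u and v=v, OF w K[OF B min w]]) blast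
  have "(\<lambda>k. m (r1 k)) \<longlonglongrightarrow> m0" using LIMSEQ_subseq_LIMSEQ[OF m r1] by (simp add: o_def)
  hence C: "\<exists>N. \<forall>i\<ge>N. \<forall>j\<ge>N. (LINT x|lborel. (indicator {-L..L} x * v (r1 i) x
      - indicator {-L..L} x * v (r1 j) x)\<^sup>2) < e" if "0 < e" for e
    by (rule minimizers_derivative_Cauchy[OF min w LIMSEQ_imp_Cauchy lim1 g that])
  obtain r2 W where r2: "strict_mono r2" and W: "L2_on {-L..L} W"
    and D: "(\<lambda>n. LINT x|lborel. (indicator {-L..L} x * v (r1 (r2 n)) x - W x)\<^sup>2) \<longlonglongrightarrow> 0"
  proof (rule L2_Cauchy_subseq_tendsto[where f="\<lambda>n x. indicator {-L..L} x * v (r1 n) x"])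
    show "L2_on {-L..L} (\<lambda>x. indicator {-L..L} x * v (r1 n) x)" for n by (rule is_wderiv_L2_on[OF w])
  qed (use L_pos C that in auto)
  show ?thesis
  proof (rule that[OF strict_mono_o[OF r1 r2] _ W])
    show "uniform_limit {-L..L} (\<lambda>k. u ((r1 \<circ> r2) k)) g sequentially"
      using filterlim_compose[OF lim1 filterlim_subseq[OF r2]] by simp
    show "(\<lambda>k. LINT x|lborel. (indicator {-L..L} x * v ((r1 \<circ> r2) k) x - W x)\<^sup>2) \<longlonglongrightarrow> 0"
      using D by simp
  qed
qed

lemma minimizers_H1_compact:
  fixes m :: "nat \<Rightarrow> real" and u :: "nat \<Rightarrow> real \<Rightarrow> real"
  assumes min: "\<And>k. minimizer a b G L (m k) (u k)" and m: "m \<longlonglongrightarrow> m0"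
  obtains r g where "strict_mono r" "minimizer a b G L m0 g"
    "H1_converges L (\<lambda>k. u (r k)) g" "uniform_limit {-L..L} (\<lambda>k. u (r k)) g sequentially"
proof -
  have "\<forall>k. \<exists>v. is_wderiv L (u k) v"
    using min unfolding minimizer_def H1m_def H1_def by blast
  then obtain v where w: "\<And>k. is_wderiv L (u k) (v k)" by metis
  obtain r g W where r: "strict_mono r" and lim: "uniform_limit {-L..L} (\<lambda>k. u (r k)) g sequentially"
    and W: "L2_on {-L..L} W"
    and D: "(\<lambda>k. LINT x|lborel. (indicator {-L..L} x * v (r k) x - W x)\<^sup>2) \<longlonglongrightarrow> 0"
    by (rule minimizers_subseq_limits[OF min w m]) blast
  have wg: "is_wderiv L g W"
  proof (rule is_wderiv_limit[where u="\<lambda>k. u (r k)" and v="\<lambda>k. v (r k)"])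
    show "(\<lambda>k. u (r k) x) \<longlonglongrightarrow> g x" if "x \<in> {-L..L}" for x
      by (rule tendsto_uniform_limitI[OF lim that])
  qed (use w W D L_pos in auto)
  have indW: "indicator {-L..L} x * W x = W x" for x
    using L2_onD(3)[OF W] by (auto simp: indicator_def)
  have D': "(\<lambda>k. LINT x|lborel. (indicator {-L..L} x * v (r k) x - indicator {-L..L} x * W x)\<^sup>2) \<longlonglongrightarrow> 0"
    unfolding indW by (rule D)
  have "(\<lambda>k. m (r k)) \<longlonglongrightarrow> m0"
    using LIMSEQ_subseq_LIMSEQ[OF m r] by (simp add: o_def)
  hence "minimizer a b G L m0 g" by (rule minimizer_limit[OF min w _ lim wg D'])
  moreover have "H1_converges L (\<lambda>k. u (r k)) g" by (rule H1_convergesI[OF w wg lim D'])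
  ultimately show ?thesis using that r lim by blast
qed

end

theorem proposition5p3:
  fixes a b G :: "real \<Rightarrow> real" and M L m :: real
    and ms :: "nat \<Rightarrow> real" and us :: "nat \<Rightarrow> real \<Rightarrow> real"
  assumes a_cont: "continuous_on UNIV a" and a_even: "\<forall>x. a (-x) = a x" and a_pos: "\<forall>x. a x > 0"
    and b_cont: "continuous_on UNIV b" and b_even: "\<forall>x. b (-x) = b x" and b_pos: "\<forall>x. b x > 0"
    and G_cont: "continuous_on UNIV G" and G_even: "\<forall>s. G (-s) = G s"
    and M_pos: "M > 0" and G_min: "\<forall>s. G s \<ge> G M" and G_M: "G M = 0"
    and G_pos: "\<forall>s\<in>{0..<M}. G s > 0"
    and L_pos: "L > 0"
    and ms_nonneg: "\<forall>k. ms k \<ge> 0" and ms_lim: "ms \<longlonglongrightarrow> m"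
    and us_min: "\<forall>k. minimizer a b G L (ms k) (us k)"
  shows "\<exists>r um. strict_mono r \<and> minimizer a b G L m um \<and>
           H1_converges L (\<lambda>k. us (r k)) um \<and>
           uniform_limit {-L..L} (\<lambda>k. us (r k)) um sequentially"
proof -
  interpret energy_setting a b G L
    using a_cont b_cont G_cont a_pos b_pos G_min G_M L_pos by unfold_locales auto
  obtain r g where "strict_mono r" "minimizer a b G L m g"
    "H1_converges L (\<lambda>k. us (r k)) g" "uniform_limit {-L..L} (\<lambda>k. us (r k)) g sequentially"
    by (rule minimizers_H1_compact[OF us_min[rule_format] ms_lim])
  thus ?thesis by blast
qed

end
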